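(* Let $G$ be a $2$-connected graph, let $F\subseteq E(G)$ be an inclusion-wise minimal set of edges such that $T=G/F$ is a cactus, let $\mathcal{W}$ be the $T$-witness structure of $G$, and let $f:V(G)\to\{1,2,3\}$ be a coloring compatible with $\mathcal{W}$. Let $Y,Z$ be two distinct monochromatic components of $f$, and let $P=(v_1,\dots,v_\ell)$, $\ell\ge2$, be a connected component of $G-(Y\cup Z)$ that is a maximal cable path in $G$ with $N_G(v_1)\subseteq Y\cup\{v_2\}$ and $N_G(v_\ell)\subseteq Z\cup\{v_{\ell-1}\}$. Then every vertex of $P$ forms a singleton witness set of $\mathcal{W}$, and each of $Y$ and $Z$ contains a big witness set of $\mathcal{W}$.
   Context: A cactus is a connected graph in which every edge lies in at most one cycle. For $F\subseteq E(G)$, $G/F$ is the graph whose vertices correspond to the parts of the partition of $V(G)$ into the vertex sets of connected components of $(V(F),F)$ and singletons $\{v\}$ for $v\notin V(F)$, two parts adjacent iff some edge of $G$ joins them; this partition is the $G/F$-witness structure $\mathcal{W}$, with $W(t)$ the part for $t\in V(G/F)$. A witness set is big if it has at least two vertices, singleton otherwise. A cable path in a graph $H$ is a path $(v_1,\dots,v_q)$ such that $N_H(v_i)=\{v_{i-1},v_{i+1}\}$ for each $2\le i\le q-1$; it is maximal if it is not contained in a longer cable path. A coloring $f:V(G)\to\{1,2,3\}$ is compatible with $\mathcal{W}$ if: (1) every witness set is monochromatic; (2) for every edge $t_xt_y\in E(T)$ with $W(t_x),W(t_y)$ both big, $f(W(t_x))\ne f(W(t_y))$; (3) for every cable path $(t_x,t_1,\dots,t_q,t_y)$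 in $T$ ($q\ge1$) with $W(t_x),W(t_y)$ big and all $W(t_i)$ singleton, $f(W(t_x))\neq f(W(t_1))$ and $f(W(t_y))\ne f(W(t_q))$. A monochromatic component of a coloring is an inclusion-wise maximal set of vertices that all have the same color and induce a connected subgraph. *)

theory Defs
  imports Main "HOL-Library.Sublist"
begin

definition graph :: "'a set \<Rightarrow> 'a set set \<Rightarrow> bool" where
  "graph V E \<longleftrightarrow> finite V \<and> (\<forall>e\<in>E. \<exists>u v. u \<noteq> v \<and> u \<in> V \<and> v \<in> V \<and> e = {u, v})"

definition nbhd :: "'a set set \<Rightarrow> 'a \<Rightarrow> 'a set" where
  "nbhd E v = {u. {u, v} \<in> E}"

definition edge_rel :: "'a set set \<Rightarrow> 'a set \<Rightarrow> ('a \<times> 'a) set" where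
  "edge_rel E S = {(u, v). {u, v} \<in> E \<and> u \<in> S \<and> v \<in> S}"

definition connected_on :: "'a set set \<Rightarrow> 'a set \<Rightarrow> bool" where
  "connected_on E S \<longleftrightarrow> S \<noteq> {} \<and> (\<forall>x\<in>S. \<forall>y\<in>S. (x, y) \<in> (edge_rel E S)\<^sup>*)"

definition two_connected :: "'a set \<Rightarrow> 'a set set \<Rightarrow> bool" where
  "two_connected V E \<longleftrightarrow> graph V E \<and> card V \<ge> 3 \<and> connected_on E V
     \<and> (\<forall>v\<in>V. connected_on E (V - {v}))"

definition is_cycle :: "'a set set \<Rightarrow> 'a list \<Rightarrow> bool" where
  "is_cycle E cs \<longleftrightarrow> length cs \<ge> 3 \<and> distinct cs
     \<and> (\<forall>i<length cs. {cs ! i, cs ! ((i + 1) mod length cs)} \<in> E)"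

definition cycle_edges :: "'a list \<Rightarrow> 'a set set" where
  "cycle_edges cs = {{cs ! i, cs ! ((i + 1) mod length cs)} | i. i < length cs}"

definition cactus :: "'a set \<Rightarrow> 'a set set \<Rightarrow> bool" where
  "cactus V E \<longleftrightarrow> graph V E \<and> connected_on E V \<and>
     (\<forall>e\<in>E. \<forall>c1 c2. is_cycle E c1 \<and> is_cycle E c2 \<and> e \<in> cycle_edges c1 \<and> e \<in> cycle_edges c2
        \<longrightarrow> cycle_edges c1 = cycle_edges c2)"

text \<open>The G/F-witness structure: components of (V(F),F) and singletons of vertices not in V(F).\<close>
definition frel :: "'a set set \<Rightarrow> ('a \<times> 'a) set" where
  "frel F = {(a, b). {a, b} \<in> F}"

definition witness :: "'a set \<Rightarrow> 'a set set \<Rightarrow> 'a set set" where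
  "witness V F = (\<lambda>x. {y \<in> V. (x, y) \<in> (frel F)\<^sup>*}) ` V"

text \<open>Edges of G/F; the vertices of G/F are the witness sets themselves, so W(t) = t.\<close>
definition contr_edges :: "'a set \<Rightarrow> 'a set set \<Rightarrow> 'a set set \<Rightarrow> 'a set set set" where
  "contr_edges V E F = {{A, B} | A B. A \<in> witness V F \<and> B \<in> witness V F \<and> A \<noteq> B
      \<and> (\<exists>a\<in>A. \<exists>b\<in>B. {a, b} \<in> E)}"

definition minimal_cactus_contraction :: "'a set \<Rightarrow> 'a set set \<Rightarrow> 'a set set \<Rightarrow> bool" where
  "minimal_cactus_contraction V E F \<longleftrightarrow> F \<subseteq> E \<and> cactus (witness V F) (contr_edges V E F)
     \<and> (\<forall>F'. F' \<subset> F \<longrightarrow> \<not> cactus (witness V F') (contr_edges V E F'))"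

definition is_path :: "'a set \<Rightarrow> 'a set set \<Rightarrow> 'a list \<Rightarrow> bool" where
  "is_path V E ps \<longleftrightarrow> ps \<noteq> [] \<and> distinct ps \<and> set ps \<subseteq> V
     \<and> (\<forall>i. i + 1 < length ps \<longrightarrow> {ps ! i, ps ! (i + 1)} \<in> E)"

definition cable_path :: "'a set \<Rightarrow> 'a set set \<Rightarrow> 'a list \<Rightarrow> bool" where
  "cable_path V E ps \<longleftrightarrow> is_path V E ps
     \<and> (\<forall>i. 0 < i \<and> i + 1 < length ps \<longrightarrow> nbhd E (ps ! i) = {ps ! (i - 1), ps ! (i + 1)})"

definition max_cable_path :: "'a set \<Rightarrow> 'a set set \<Rightarrow> 'a list \<Rightarrow> bool" where
  "max_cable_path V E ps \<longleftrightarrow> cable_path V E ps \<and>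
     \<not> (\<exists>qs. cable_path V E qs \<and> length qs > length ps \<and> (sublist ps qs \<or> sublist (rev ps) qs))"

definition compatible :: "'a set \<Rightarrow> 'a set set \<Rightarrow> 'a set set \<Rightarrow> ('a \<Rightarrow> nat) \<Rightarrow> bool" where
  "compatible V E F f \<longleftrightarrow>
     (\<forall>v\<in>V. f v \<in> {1, 2, 3}) \<and>
     (\<forall>W\<in>witness V F. \<forall>x\<in>W. \<forall>y\<in>W. f x = f y) \<and>
     (\<forall>A B. {A, B} \<in> contr_edges V E F \<and> card A \<ge> 2 \<and> card B \<ge> 2
        \<longrightarrow> (\<forall>a\<in>A. \<forall>b\<in>B. f a \<noteq> f b)) \<and>
     (\<forall>ts. cable_path (witness V F) (contr_edges V E F) ts \<and> length ts \<ge> 3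
        \<and> card (hd ts) \<ge> 2 \<and> card (last ts) \<ge> 2
        \<and> (\<forall>i. 0 < i \<and> i + 1 < length ts \<longrightarrow> card (ts ! i) = 1)
        \<longrightarrow> (\<forall>a\<in>hd ts. \<forall>b\<in>ts ! 1. f a \<noteq> f b)
          \<and> (\<forall>a\<in>last ts. \<forall>b\<in>ts ! (length ts - 2). f a \<noteq> f b))"

definition monochromatic :: "('a \<Rightarrow> nat) \<Rightarrow> 'a set \<Rightarrow> bool" where
  "monochromatic f S \<longleftrightarrow> (\<exists>c. \<forall>x\<in>S. f x = c)"

definition mono_component :: "'a set \<Rightarrow> 'a set set \<Rightarrow> ('a \<Rightarrow> nat) \<Rightarrow> 'a set \<Rightarrow> bool" where
  "mono_component V E f S \<longleftrightarrow> S \<subseteq> V \<and> connected_on E S \<and> monochromatic f S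
     \<and> (\<forall>S'. S \<subset> S' \<and> S' \<subseteq> V \<and> connected_on E S' \<longrightarrow> \<not> monochromatic f S')"

definition component :: "'a set \<Rightarrow> 'a set set \<Rightarrow> 'a set \<Rightarrow> bool" where
  "component V E S \<longleftrightarrow> S \<subseteq> V \<and> connected_on E S
     \<and> (\<forall>S'. S \<subset> S' \<and> S' \<subseteq> V \<longrightarrow> \<not> connected_on E S')"

end

theory Submission
  imports Defs
begin

(* Every F-edge joins two vertices of the same colour, so witness sets meeting P stay inside P
   and witness sets meeting Y or Z stay inside Y or Z. By maximality of the cable path and
   2-connectivity, v_1 has two neighbours in Y. If they lay in different witness sets, then
   leaving Y towards Z and returning along P to the witness set X of v_1 would give two cycles
   of the cactus T through the same edge at X but with different vertex sets. Hence both
   neighbours lie in one big witness set inside Y, and symmetrically for Z.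
   If some F-edge lay on P, delete the last one: its far end b becomes a singleton witness
   set with exactly two non-adjacent neighbours in the new contraction, which is therefore
   the old cactus with one edge subdivided, again a cactus. This contradicts minimality of F. *)

section \<open>Paths and cycles as vertex lists\<close>

fun path_edges :: "'a list \<Rightarrow> 'a set set" where
  "path_edges (x # y # r) = insert {x, y} (path_edges (y # r))"
| "path_edges _ = {}"

lemma path_edges_conv_nth: "path_edges xs = {{xs ! i, xs ! (i + 1)} | i. i + 1 < length xs}"
proof (induction xs rule: path_edges.induct)
  case (1 x y r)
  have "{{(x # y # r) ! i, (x # y # r) ! (i + 1)} | i. i + 1 < length (x # y # r)}
      = insert {x, y} {{(y # r) ! i, (y # r) ! (i + 1)} | i. i + 1 < length (y # r)}"
  proof (intro set_eqI iffI)
    fix e assume "e \<in> {{(x # y # r) ! i, (x # y # r) ! (i + 1)} | i. i + 1 < length (x # y # r)}"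
    then obtain i where i: "e = {(x # y # r) ! i, (x # y # r) ! (i + 1)}"
        "i + 1 < length (x # y # r)"
      by blast
    then show "e \<in> insert {x, y} {{(y # r) ! i, (y # r) ! (i + 1)} | i. i + 1 < length (y # r)}"
      by (cases i) auto
  next
    fix e assume "e \<in> insert {x, y} {{(y # r) ! i, (y # r) ! (i + 1)} | i. i + 1 < length (y # r)}"
    then consider "e = {x, y}" | i where "e = {(y # r) ! i, (y # r) ! (i + 1)}"
        "i + 1 < length (y # r)"
      by blast
    then show "e \<in> {{(x # y # r) ! i, (x # y # r) ! (i + 1)} | i. i + 1 < length (x # y # r)}"
    proof cases
      case 1 then show ?thesis by force
    next
      case 2 then show ?thesis by (auto intro!: exI[of _ "Suc i"])
    qed
  qed
  then show ?case using 1 by simp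
qed auto

lemma path_edges_Cons: "r \<noteq> [] \<Longrightarrow> path_edges (x # r) = insert {x, hd r} (path_edges r)"
  by (cases r) auto

lemma path_edges_append:
  "path_edges (xs @ ys) =
     path_edges xs \<union> path_edges ys \<union> (if xs \<noteq> [] \<and> ys \<noteq> [] then {{last xs, hd ys}} else {})"
proof (induction xs)
  case (Cons x r)
  then show ?case by (cases "r = []"; cases ys) (auto simp: path_edges_Cons)
qed simp

lemma path_edges_map: "path_edges (map h xs) = (`) h ` path_edges xs"
  by (induction xs rule: path_edges.induct) auto

lemma path_edges_elem: "e \<in> path_edges xs \<Longrightarrow> \<exists>a b. e = {a, b} \<and> a \<in> set xs \<and> b \<in> set xs"
  by (induction xs rule: path_edges.induct) auto

lemma path_edges_subset_set: "e \<in> path_edges xs \<Longrightarrow> e \<subseteq> set xs"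
  by (induction xs rule: path_edges.induct) auto

lemma path_edges_rtrancl_edge_rel:
  assumes "xs \<noteq> []" "path_edges xs \<subseteq> E" "set xs \<subseteq> S"
  shows "(hd xs, last xs) \<in> (edge_rel E S)\<^sup>*"
  using assms
proof (induction xs rule: path_edges.induct)
  case (1 x y r)
  then have "(x, y) \<in> edge_rel E S" by (simp add: edge_rel_def)
  with 1 show ?case by (simp add: converse_rtrancl_into_rtrancl)
qed auto

lemma cycle_edges_conv_path_edges:
  assumes "xs \<noteq> []"
  shows "cycle_edges xs = insert {last xs, hd xs} (path_edges xs)"
proof -
  let ?n = "length xs"
  have "cycle_edges xs = {{xs ! i, xs ! ((i + 1) mod ?n)} | i. i < ?n}"
    by (simp add: cycle_edges_def)
  also have "\<dots> = insert {last xs, hd xs} {{xs ! i, xs ! (i + 1)} | i. i + 1 < ?n}"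
  proof (intro set_eqI iffI)
    fix e assume "e \<in> {{xs ! i, xs ! ((i + 1) mod ?n)} | i. i < ?n}"
    then obtain i where i: "e = {xs ! i, xs ! ((i + 1) mod ?n)}" "i < ?n" by blast
    show "e \<in> insert {last xs, hd xs} {{xs ! i, xs ! (i + 1)} | i. i + 1 < ?n}"
    proof (cases "i + 1 < ?n")
      case True then show ?thesis using i by auto
    next
      case False
      then have "i = ?n - 1" using i by simp
      then have "e = {last xs, hd xs}" using i assms by (simp add: last_conv_nth hd_conv_nth)
      then show ?thesis by simp
    qed
  next
    fix e assume "e \<in> insert {last xs, hd xs} {{xs ! i, xs ! (i + 1)} | i. i + 1 < ?n}"
    then consider "e = {last xs, hd xs}" | i where "e = {xs ! i, xs ! (i + 1)}" "i + 1 < ?n"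
      by blast
    then show "e \<in> {{xs ! i, xs ! ((i + 1) mod ?n)} | i. i < ?n}"
    proof cases
      case 1
      then have "e = {xs ! (?n - 1), xs ! (((?n - 1) + 1) mod ?n)}" using assms
        by (simp add: last_conv_nth hd_conv_nth)
      moreover have "?n - 1 < ?n" using assms by simp
      ultimately show ?thesis by blast
    next
      case 2 then show ?thesis by force
    qed
  qed
  also have "\<dots> = insert {last xs, hd xs} (path_edges xs)" by (simp add: path_edges_conv_nth)
  finally show ?thesis .
qed

lemma cycle_edges_Cons:
  "r \<noteq> [] \<Longrightarrow> cycle_edges (x # r) = insert {last r, x} (insert {x, hd r} (path_edges r))"
  by (simp add: cycle_edges_conv_path_edges path_edges_Cons)

lemma is_cycle_iff: "is_cycle E c \<longleftrightarrow> length c \<ge> 3 \<and> distinct c \<and> cycle_edges c \<subseteq> E"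
  unfolding is_cycle_def cycle_edges_def by blast

lemma is_cycle_ConsI:
  assumes "x \<notin> set r" "distinct r" "length r \<ge> 2" "path_edges r \<subseteq> E"
    "{x, hd r} \<in> E" "{last r, x} \<in> E"
  shows "is_cycle E (x # r)"
proof -
  have "r \<noteq> []" using assms(3) by auto
  then show ?thesis using assms by (auto simp: is_cycle_iff cycle_edges_Cons)
qed

lemma cycle_edges_elem: "e \<in> cycle_edges xs \<Longrightarrow> \<exists>a b. e = {a, b} \<and> a \<in> set xs \<and> b \<in> set xs"
proof -
  assume e: "e \<in> cycle_edges xs"
  then have "xs \<noteq> []" by (auto simp: cycle_edges_def)
  then show ?thesis using e path_edges_elem[of e xs]
    by (auto simp: cycle_edges_conv_path_edges intro: last_in_set hd_in_set)
qed

lemma Union_cycle_edges: "\<Union> (cycle_edges xs) = set xs"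
proof
  show "\<Union> (cycle_edges xs) \<subseteq> set xs" using cycle_edges_elem by fastforce
  show "set xs \<subseteq> \<Union> (cycle_edges xs)"
  proof
    fix x assume "x \<in> set xs"
    then obtain i where "i < length xs" "x = xs ! i" by (auto simp: in_set_conv_nth)
    then show "x \<in> \<Union> (cycle_edges xs)" unfolding cycle_edges_def by blast
  qed
qed

lemma cycle_edges_map: "cycle_edges (map h xs) = (`) h ` cycle_edges xs"
proof (cases "xs = []")
  case True then show ?thesis by (simp add: cycle_edges_def)
next
  case False then show ?thesis
    by (simp add: cycle_edges_conv_path_edges path_edges_map last_map hd_map)
qed

lemma cycle_edges_rotate1: "cycle_edges (rotate1 xs) = cycle_edges xs"
proof (cases xs)
  case (Cons a r)
  then show ?thesis
    by (cases "r = []") (auto simp: cycle_edges_conv_path_edges path_edges_append path_edges_Cons)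
qed simp

lemma cycle_edges_rotate: "cycle_edges (rotate n xs) = cycle_edges xs"
  by (induction n) (simp_all add: rotate_def cycle_edges_rotate1)

lemma is_cycle_rotate_to:
  assumes "is_cycle E c" "x \<in> set c"
  obtains r where "is_cycle E (x # r)" "cycle_edges (x # r) = cycle_edges c"
proof -
  obtain i where i: "i < length c" "c ! i = x" using assms(2) by (auto simp: in_set_conv_nth)
  let ?d = "rotate i c"
  have "?d \<noteq> []" using i by auto
  moreover have "hd ?d = x"
    using i nth_rotate[of 0 c i] \<open>?d \<noteq> []\<close> by (simp add: hd_conv_nth)
  ultimately have "?d = x # tl ?d" by (metis list.collapse)
  moreover have "is_cycle E ?d" "cycle_edges ?d = cycle_edges c"
    using assms(1) by (simp_all add: is_cycle_iff cycle_edges_rotate)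
  ultimately show thesis using that by metis
qed

section \<open>Walks, connected sets and monochromatic components\<close>

lemma graph_edgeD: "graph V E \<Longrightarrow> {a, b} \<in> E \<Longrightarrow> a \<in> V \<and> b \<in> V \<and> a \<noteq> b"
  unfolding graph_def by (metis doubleton_eq_iff insert_absorb2)

lemma graph_edge_doubleton: "graph V E \<Longrightarrow> e \<in> E \<Longrightarrow> \<exists>a b. e = {a, b} \<and> a \<in> V \<and> b \<in> V \<and> a \<noteq> b"
  unfolding graph_def by blast

lemma mem_nbhd_iff: "u \<in> nbhd E v \<longleftrightarrow> {u, v} \<in> E"
  by (simp add: nbhd_def)

lemma mem_nbhd_iff': "u \<in> nbhd E v \<longleftrightarrow> {v, u} \<in> E"
  by (simp add: nbhd_def insert_commute)

lemma is_cycle_set_subset: "graph V E \<Longrightarrow> is_cycle E c \<Longrightarrow> set c \<subseteq> V"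
  using Union_cycle_edges[of c] graph_edge_doubleton[of V E] by (fastforce simp: is_cycle_iff)

lemma edge_rel_sym: "(x, y) \<in> edge_rel E S \<Longrightarrow> (y, x) \<in> edge_rel E S"
  by (auto simp: edge_rel_def insert_commute)

lemma rtrancl_edge_rel_sym: "(x, y) \<in> (edge_rel E S)\<^sup>* \<Longrightarrow> (y, x) \<in> (edge_rel E S)\<^sup>*"
  by (metis edge_rel_sym symD symI sym_rtrancl)

lemma rtrancl_edge_rel_mono: "S \<subseteq> S' \<Longrightarrow> (x, y) \<in> (edge_rel E S)\<^sup>* \<Longrightarrow> (x, y) \<in> (edge_rel E S')\<^sup>*"
  using rtrancl_mono[of "edge_rel E S" "edge_rel E S'"] by (auto simp: edge_rel_def)

lemma rtrancl_edge_rel_closed: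
  assumes "(a, b) \<in> (edge_rel E S)\<^sup>*" "a \<in> U"
    and "\<And>u w. u \<in> U \<Longrightarrow> w \<in> S \<Longrightarrow> {u, w} \<in> E \<Longrightarrow> w \<in> U"
  shows "b \<in> U"
  using assms(1)
proof (induction rule: rtrancl_induct)
  case (step y z)
  then show ?case using assms(3) unfolding edge_rel_def by blast
qed (rule assms(2))

lemma rtrancl_edge_rel_first_entry:
  assumes "(a, b) \<in> (edge_rel E S)\<^sup>*" "a \<in> S - X" "b \<in> X"
  shows "\<exists>u x. (a, u) \<in> (edge_rel E (S - X))\<^sup>* \<and> u \<in> S - X \<and> x \<in> X \<inter> S \<and> {u, x} \<in> E"
proof -
  have "((a, b) \<in> (edge_rel E (S - X))\<^sup>* \<and> b \<in> S - X) \<or>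
    (\<exists>u x. (a, u) \<in> (edge_rel E (S - X))\<^sup>* \<and> u \<in> S - X \<and> x \<in> X \<inter> S \<and> {u, x} \<in> E)"
    using assms(1)
  proof (induction rule: rtrancl_induct)
    case base then show ?case using assms(2) by simp
  next
    case (step y z)
    then have yz: "{y, z} \<in> E" "z \<in> S" by (simp_all add: edge_rel_def)
    show ?case
    proof (cases "z \<in> X")
      case False
      then have "(y, z) \<in> edge_rel E (S - X)" if "y \<in> S - X" using that yz
        by (simp add: edge_rel_def)
      then show ?thesis using step.IH yz(2) False by (meson DiffI rtrancl.rtrancl_into_rtrancl)
    qed (use step.IH yz in blast)
  qed
  then show ?thesis using assms(3) by blast
qed

lemma rtrancl_edge_rel_simple_path:
  assumes "(a, b) \<in> (edge_rel E S)\<^sup>*" "a \<in> S"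
  shows "\<exists>R. R \<noteq> [] \<and> hd R = a \<and> last R = b \<and> distinct R \<and> set R \<subseteq> S \<and> path_edges R \<subseteq> E"
  using assms(1)
proof (induction rule: rtrancl_induct)
  case base
  then show ?case using assms(2) by (intro exI[of _ "[a]"]) auto
next
  case (step y z)
  then obtain R where R: "R \<noteq> []" "hd R = a" "last R = y" "distinct R" "set R \<subseteq> S"
      "path_edges R \<subseteq> E"
    by blast
  have yz: "{y, z} \<in> E" "z \<in> S" using step(2) by (auto simp: edge_rel_def)
  show ?case
  proof (cases "z \<in> set R")
    case True
    then obtain xs ys where xs: "R = xs @ z # ys" by (meson split_list)
    let ?R = "xs @ [z]"
    have "hd ?R = a" using R(2) xs by (cases xs) auto
    moreover have "path_edges ?R \<subseteq> E"
      using R(6) xs by (auto simp: path_edges_append path_edges_Cons split: if_splits)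
    moreover have "distinct ?R" "set ?R \<subseteq> S" using R(4,5) xs by auto
    ultimately show ?thesis by (intro exI[of _ ?R]) auto
  next
    case False
    let ?R = "R @ [z]"
    have "path_edges ?R \<subseteq> E" using R(3,6) yz R(1) by (auto simp: path_edges_append)
    moreover have "distinct ?R" "set ?R \<subseteq> S" using R(4,5) False yz by auto
    ultimately show ?thesis using R by (intro exI[of _ ?R]) auto
  qed
qed

lemma rtrancl_edge_rel_cycle:
  assumes "(a, b) \<in> (edge_rel E S)\<^sup>*" "a \<in> S" "a \<noteq> b" "x \<notin> S" "{x, a} \<in> E" "{b, x} \<in> E"
  shows "\<exists>r. is_cycle E (x # r) \<and> {x, a} \<in> cycle_edges (x # r) \<and> b \<in> set r \<and> set r \<subseteq> S"
proof -
  obtain R where R: "R \<noteq> []" "hd R = a" "last R = b" "distinct R" "set R \<subseteq> S" "path_edges R \<subseteq> E"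
    using rtrancl_edge_rel_simple_path[OF assms(1,2)] by blast
  have "length R \<ge> 2" using R(1-3) assms(3) by (cases R; cases "tl R") auto
  then have "is_cycle E (x # R)" using R assms(4-6) by (intro is_cycle_ConsI) auto
  moreover have "{x, a} \<in> cycle_edges (x # R)" using R by (simp add: cycle_edges_Cons)
  ultimately show ?thesis using R by (intro exI[of _ R]) auto
qed

lemma connected_on_edge: "{x, y} \<in> E \<Longrightarrow> connected_on E {x, y}"
  unfolding connected_on_def edge_rel_def by (auto simp: insert_commute)

lemma connected_on_Un:
  assumes A: "connected_on E A" and B: "connected_on E B" and "A \<inter> B \<noteq> {}"
  shows "connected_on E (A \<union> B)"
proof -
  obtain c where c: "c \<in> A" "c \<in> B" using assms(3) by blast
  have to_c: "(a, c) \<in> (edge_rel E (A \<union> B))\<^sup>*" if "a \<in> A \<union> B" for a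
  proof (cases "a \<in> A")
    case True
    then have "(a, c) \<in> (edge_rel E A)\<^sup>*" using A c by (simp add: connected_on_def)
    then show ?thesis by (rule rtrancl_edge_rel_mono[rotated]) blast
  next
    case False
    then have "(a, c) \<in> (edge_rel E B)\<^sup>*" using B c that by (simp add: connected_on_def)
    then show ?thesis by (rule rtrancl_edge_rel_mono[rotated]) blast
  qed
  show ?thesis
    unfolding connected_on_def
  proof (intro conjI ballI)
    fix a b assume "a \<in> A \<union> B" "b \<in> A \<union> B"
    then show "(a, b) \<in> (edge_rel E (A \<union> B))\<^sup>*"
      using to_c rtrancl_edge_rel_sym rtrancl_trans by metis
  qed (use c in blast)
qed

lemma mono_component_edge_closed:
  assumes S: "mono_component V E f S" and "x \<in> S" "{x, y} \<in> E" "y \<in> V" "f y = f x"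
  shows "y \<in> S"
proof (rule ccontr)
  assume "y \<notin> S"
  then have "S \<subset> S \<union> {x, y}" by blast
  moreover have "connected_on E (S \<union> {x, y})"
    using S assms(2,3) by (intro connected_on_Un connected_on_edge) (auto simp: mono_component_def)
  moreover have "monochromatic f (S \<union> {x, y})"
    using S assms(2,5) by (auto simp: mono_component_def monochromatic_def)
  moreover have "S \<union> {x, y} \<subseteq> V" using S assms(2,4) by (auto simp: mono_component_def)
  ultimately show False using S unfolding mono_component_def by blast
qed

lemma mono_components_disjoint:
  assumes Y: "mono_component V E f Y" and Z: "mono_component V E f Z" and "Y \<noteq> Z"
  shows "Y \<inter> Z = {}"
proof (rule ccontr)
  assume "Y \<inter> Z \<noteq> {}"
  then obtain x where x: "x \<in> Y" "x \<in> Z" by blast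
  have "connected_on E (Y \<union> Z)"
    using Y Z x by (intro connected_on_Un) (auto simp: mono_component_def)
  moreover have "monochromatic f (Y \<union> Z)"
  proof -
    obtain c d where "\<forall>y\<in>Y. f y = c" "\<forall>z\<in>Z. f z = d"
      using Y Z by (auto simp: mono_component_def monochromatic_def)
    moreover from calculation x have "f x = c" "f x = d" by blast+
    ultimately show ?thesis unfolding monochromatic_def by auto
  qed
  moreover have "Y \<union> Z \<subseteq> V" using Y Z by (simp add: mono_component_def)
  ultimately have "\<not> Y \<subset> Y \<union> Z" "\<not> Z \<subset> Y \<union> Z"
    using Y Z unfolding mono_component_def by blast+
  then show False using \<open>Y \<noteq> Z\<close> by blast
qed

section \<open>Witness structures and contractions\<close>

definition witness_set :: "'a set \<Rightarrow> 'a set set \<Rightarrow> 'a \<Rightarrow> 'a set" where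
  "witness_set V F x = {y \<in> V. (x, y) \<in> (frel F)\<^sup>*}"

lemma witness_conv_witness_set: "witness V F = witness_set V F ` V"
  unfolding witness_def witness_set_def by (rule refl)

lemma mem_frel_iff [simp]: "(x, y) \<in> frel F \<longleftrightarrow> {x, y} \<in> F"
  by (simp add: frel_def)

lemma frel_rtrancl_sym:
  assumes "(x, y) \<in> (frel F)\<^sup>*"
  shows "(y, x) \<in> (frel F)\<^sup>*"
proof -
  have "sym (frel F)" by (rule symI) (simp add: insert_commute)
  from sym_rtrancl[OF this] assms show ?thesis by (rule symD)
qed

lemma witness_set_self: "x \<in> V \<Longrightarrow> x \<in> witness_set V F x"
  by (simp add: witness_set_def)

lemma witness_set_subset: "witness_set V F x \<subseteq> V"
  by (auto simp: witness_set_def)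

lemma witness_set_in_witness: "x \<in> V \<Longrightarrow> witness_set V F x \<in> witness V F"
  by (simp add: witness_conv_witness_set)

lemma witness_set_eq:
  assumes "y \<in> witness_set V F x"
  shows "witness_set V F y = witness_set V F x"
proof -
  have xy: "(x, y) \<in> (frel F)\<^sup>*" using assms by (simp add: witness_set_def)
  have "(y, z) \<in> (frel F)\<^sup>* \<longleftrightarrow> (x, z) \<in> (frel F)\<^sup>*" for z
    using rtrancl_trans[OF xy] rtrancl_trans[OF frel_rtrancl_sym[OF xy]] by blast
  then show ?thesis unfolding witness_set_def by simp
qed

lemma witness_eq_witness_set:
  assumes "A \<in> witness V F" "x \<in> A"
  shows "A = witness_set V F x"
proof -
  obtain z where "A = witness_set V F z" using assms(1) by (auto simp: witness_conv_witness_set)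
  then show ?thesis using witness_set_eq[of x V F z] assms(2) by simp
qed

lemma witness_set_mono: "F' \<subseteq> F \<Longrightarrow> witness_set V F' x \<subseteq> witness_set V F x"
  unfolding witness_set_def using rtrancl_mono[of "frel F'" "frel F"] by (auto simp: frel_def)

lemma witness_set_step:
  "y \<in> witness_set V F x \<Longrightarrow> {y, z} \<in> F \<Longrightarrow> z \<in> V \<Longrightarrow> z \<in> witness_set V F x"
  by (auto simp: witness_set_def intro: rtrancl_into_rtrancl)

lemma witness_set_closed:
  assumes "x \<in> S" "\<And>y z. y \<in> S \<Longrightarrow> {y, z} \<in> F \<Longrightarrow> z \<in> S"
  shows "witness_set V F x \<subseteq> S"
proof
  fix y assume "y \<in> witness_set V F x"
  then have "(x, y) \<in> (frel F)\<^sup>*" by (simp add: witness_set_def)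
  then show "y \<in> S" by (induction rule: rtrancl_induct) (use assms in auto)
qed

lemma witness_set_isolated: "x \<in> V \<Longrightarrow> (\<And>z. {x, z} \<notin> F) \<Longrightarrow> witness_set V F x = {x}"
  using witness_set_closed[of x "{x}" F V] witness_set_self[of x V F] by blast

lemma contr_edges_iff:
  "{A, B} \<in> contr_edges V E F \<longleftrightarrow>
     A \<in> witness V F \<and> B \<in> witness V F \<and> A \<noteq> B \<and> (\<exists>a\<in>A. \<exists>b\<in>B. {a, b} \<in> E)"
proof
  assume "{A, B} \<in> contr_edges V E F"
  then obtain A' B' where h: "{A, B} = {A', B'}" "A' \<in> witness V F" "B' \<in> witness V F" "A' \<noteq> B'"
      "\<exists>a\<in>A'. \<exists>b\<in>B'. {a, b} \<in> E"
    unfolding contr_edges_def mem_Collect_eq by (elim exE conjE) blast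
  from h(1) have "(A = A' \<and> B = B') \<or> (A = B' \<and> B = A')" by (simp add: doubleton_eq_iff)
  then show "A \<in> witness V F \<and> B \<in> witness V F \<and> A \<noteq> B \<and> (\<exists>a\<in>A. \<exists>b\<in>B. {a, b} \<in> E)"
  proof
    assume "A = B' \<and> B = A'"
    moreover obtain a b where "a \<in> A'" "b \<in> B'" "{b, a} \<in> E" using h(5)
      by (auto simp: insert_commute)
    ultimately show ?thesis using h by blast
  qed (use h in blast)
next
  assume "A \<in> witness V F \<and> B \<in> witness V F \<and> A \<noteq> B \<and> (\<exists>a\<in>A. \<exists>b\<in>B. {a, b} \<in> E)"
  then show "{A, B} \<in> contr_edges V E F" unfolding contr_edges_def mem_Collect_eq
    by (intro exI[of _ A] exI[of _ B]) simp
qed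

lemma graph_contr: "finite V \<Longrightarrow> graph (witness V F) (contr_edges V E F)"
  unfolding graph_def
proof (intro conjI ballI)
  assume "finite V"
  then show "finite (witness V F)" by (simp add: witness_conv_witness_set)
next
  fix e assume "e \<in> contr_edges V E F"
  then show "\<exists>u v. u \<noteq> v \<and> u \<in> witness V F \<and> v \<in> witness V F \<and> e = {u, v}"
    unfolding contr_edges_def by blast
qed

lemma contr_edgeI:
  assumes "x \<in> V" "y \<in> V" "{x, y} \<in> E" "y \<notin> witness_set V F x"
  shows "{witness_set V F x, witness_set V F y} \<in> contr_edges V E F"
proof -
  have "x \<in> witness_set V F x" "y \<in> witness_set V F y" using assms(1,2)
    by (simp_all add: witness_set_self)
  then show ?thesis using assms by (auto simp: contr_edges_iff witness_set_in_witness)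
qed

lemma rtrancl_edge_rel_contr:
  assumes "(x, y) \<in> (edge_rel E S)\<^sup>*" "S \<subseteq> V" "\<And>z. z \<in> S \<Longrightarrow> witness_set V F z \<in> \<S>"
  shows "(witness_set V F x, witness_set V F y) \<in> (edge_rel (contr_edges V E F) \<S>)\<^sup>*"
  using assms(1)
proof (induction rule: rtrancl_induct)
  case (step y z)
  have yz: "{y, z} \<in> E" "y \<in> S" "z \<in> S" using step(2) by (auto simp: edge_rel_def)
  show ?case
  proof (cases "witness_set V F y = witness_set V F z")
    case False
    have "y \<in> V" "z \<in> V" using yz assms(2) by auto
    then have "{witness_set V F y, witness_set V F z} \<in> contr_edges V E F"
      using False yz(1) by (auto simp: contr_edges_iff witness_set_self witness_set_in_witness)
    then have "(witness_set V F y, witness_set V F z) \<in> edge_rel (contr_edges V E F) \<S>"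
      using assms(3) yz by (simp add: edge_rel_def)
    then show ?thesis using step(3) by simp
  qed (use step(3) in simp)
qed simp

lemma connected_on_contr:
  assumes "connected_on E V"
  shows "connected_on (contr_edges V E F) (witness V F)"
  unfolding connected_on_def
proof (intro conjI ballI)
  show "witness V F \<noteq> {}" using assms by (auto simp: connected_on_def witness_conv_witness_set)
next
  fix A B assume "A \<in> witness V F" "B \<in> witness V F"
  then obtain x y where "x \<in> V" "y \<in> V" "A = witness_set V F x" "B = witness_set V F y"
    by (auto simp: witness_conv_witness_set)
  with assms show "(A, B) \<in> (edge_rel (contr_edges V E F) (witness V F))\<^sup>*"
    using rtrancl_edge_rel_contr[of x y E V V F "witness V F"]
    by (simp add: connected_on_def witness_set_in_witness)
qed

lemma rtrancl_edge_rel_contr_avoiding: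
  assumes "(x, y) \<in> (edge_rel E (V - X))\<^sup>*"
  shows "(witness_set V F x, witness_set V F y)
    \<in> (edge_rel (contr_edges V E F) (witness V F - {X}))\<^sup>*"
  using assms
proof (rule rtrancl_edge_rel_contr)
  fix z assume "z \<in> V - X"
  then show "witness_set V F z \<in> witness V F - {X}"
    using witness_set_self[of z V F] witness_set_in_witness[of z V F] by blast
qed blast

lemma compatible_F_edge_same_colour:
  assumes "compatible V E F f" "x \<in> V" "y \<in> V" "{x, y} \<in> F"
  shows "f x = f y"
proof -
  have "x \<in> witness_set V F x" "y \<in> witness_set V F x"
    using assms(2-4) by (auto simp: witness_set_def)
  moreover have "\<forall>W\<in>witness V F. \<forall>x\<in>W. \<forall>y\<in>W. f x = f y"
    using assms(1) unfolding compatible_def by (elim conjE)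
  ultimately show ?thesis using witness_set_in_witness[OF assms(2)] by blast
qed

lemma witness_set_subset_mono_component:
  assumes "graph V E" "F \<subseteq> E" "compatible V E F f" "mono_component V E f S" "x \<in> S"
  shows "witness_set V F x \<subseteq> S"
proof (rule witness_set_closed[OF assms(5)])
  fix y z assume y: "y \<in> S" and yz: "{y, z} \<in> F"
  have e: "{y, z} \<in> E" using yz assms(2) by blast
  then have "y \<in> V" "z \<in> V" using graph_edgeD[OF assms(1)] by blast+
  then show "z \<in> S"
    using mono_component_edge_closed[OF assms(4) y e] compatible_F_edge_same_colour[OF assms(3)] yz
    by metis
qed

lemma rtrancl_edge_rel_contr_mono_component:
  assumes "graph V E" "F \<subseteq> E" "compatible V E F f" "mono_component V E f S" "x \<in> S" "y \<in> S"
  shows "(witness_set V F x, witness_set V F y)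
    \<in> (edge_rel (contr_edges V E F) {D \<in> witness V F. D \<subseteq> S})\<^sup>*"
proof (rule rtrancl_edge_rel_contr)
  show "(x, y) \<in> (edge_rel E S)\<^sup>*" using assms(4-6)
    by (simp add: mono_component_def connected_on_def)
  show "S \<subseteq> V" using assms(4) by (simp add: mono_component_def)
  then show "witness_set V F z \<in> {D \<in> witness V F. D \<subseteq> S}" if "z \<in> S" for z
    using that witness_set_subset_mono_component[OF assms(1-4) that]
      witness_set_in_witness[of z V F]
    by blast
qed

section \<open>The cycle property of cacti\<close>

definition cycle_property :: "'a set set \<Rightarrow> bool" where
  "cycle_property E \<longleftrightarrow> (\<forall>e\<in>E. \<forall>c1 c2. is_cycle E c1 \<and> is_cycle E c2
     \<and> e \<in> cycle_edges c1 \<and> e \<in> cycle_edges c2 \<longrightarrow> cycle_edges c1 = cycle_edges c2)"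

lemma cactus_iff: "cactus V E \<longleftrightarrow> graph V E \<and> connected_on E V \<and> cycle_property E"
  unfolding cactus_def cycle_property_def by blast

lemma cycle_propertyD:
  assumes "cycle_property E" "is_cycle E c1" "is_cycle E c2" "e \<in> cycle_edges c1"
      "e \<in> cycle_edges c2"
  shows "cycle_edges c1 = cycle_edges c2"
proof -
  have "e \<in> E" using assms(2,4) by (auto simp: is_cycle_iff)
  then show ?thesis using assms unfolding cycle_property_def by blast
qed

lemma cycle_property_same_vertices:
  assumes "cycle_property E" "is_cycle E c1" "is_cycle E c2" "e \<in> cycle_edges c1"
      "e \<in> cycle_edges c2"
  shows "set c1 = set c2"
  using cycle_propertyD[OF assms] Union_cycle_edges by metis

lemma cycle_property_detour:
  assumes E: "cycle_property E" and "x \<notin> S\<^sub>1" "x \<notin> S\<^sub>2" "a \<in> S\<^sub>1" "a \<in> S\<^sub>2"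
    and "{x, a} \<in> E" "{b, x} \<in> E" "{c, x} \<in> E" "a \<noteq> b" "a \<noteq> c"
    and "(a, b) \<in> (edge_rel E S\<^sub>1)\<^sup>*" "(a, c) \<in> (edge_rel E S\<^sub>2)\<^sup>*"
  shows "c \<in> S\<^sub>1"
proof -
  obtain r\<^sub>1 where r\<^sub>1: "is_cycle E (x # r\<^sub>1)" "{x, a} \<in> cycle_edges (x # r\<^sub>1)" "set r\<^sub>1 \<subseteq> S\<^sub>1"
    using rtrancl_edge_rel_cycle[of a b E S\<^sub>1 x] assms by blast
  obtain r\<^sub>2 where r\<^sub>2: "is_cycle E (x # r\<^sub>2)" "{x, a} \<in> cycle_edges (x # r\<^sub>2)" "c \<in> set r\<^sub>2"
    "set r\<^sub>2 \<subseteq> S\<^sub>2"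
    using rtrancl_edge_rel_cycle[of a c E S\<^sub>2 x] assms by blast
  have "set (x # r\<^sub>1) = set (x # r\<^sub>2)"
    by (rule cycle_property_same_vertices[OF E r\<^sub>1(1) r\<^sub>2(1) r\<^sub>1(2) r\<^sub>2(2)])
  then show ?thesis using r\<^sub>1(3) r\<^sub>2(3,4) assms(3) by auto
qed

text \<open>Up to \<open>h\<close>, \<open>E\<close> is a subgraph of \<open>E'\<close> in which the edge \<open>{h p, h q}\<close> has been
  subdivided by the new vertex \<open>s\<close>.\<close>

locale edge_subdivision =
  fixes V :: "'a set" and E :: "'a set set" and s p q :: 'a and h :: "'a \<Rightarrow> 'b"
    and E' :: "'b set set"
  assumes graph: "graph V E" and nbhd_s: "nbhd E s = {p, q}"
    and not_adjacent: "{p, q} \<notin> E"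
    and inj: "inj_on h (V - {s})"
    and edge_image: "\<And>u v. {u, v} \<in> E \<Longrightarrow> u \<noteq> s \<Longrightarrow> v \<noteq> s \<Longrightarrow> {h u, h v} \<in> E'"
    and image_pq: "{h p, h q} \<in> E'"
begin

definition rest :: "'a list \<Rightarrow> 'a set set" where
  "rest c = cycle_edges c - {{s, p}, {s, q}}"

definition image_edges :: "'a list \<Rightarrow> 'b set set" where
  "image_edges c = (`) h ` rest c \<union> (if s \<in> set c then {{h p, h q}} else {})"

lemma s_edges: "{s, p} \<in> E" "{s, q} \<in> E"
  using nbhd_s by (auto simp: mem_nbhd_iff' dest: equalityD2)

lemma p_q_in: "p \<in> V - {s}" "q \<in> V - {s}"
  using graph_edgeD[OF graph s_edges(1)] graph_edgeD[OF graph s_edges(2)] by auto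

lemma edge_at_s:
  assumes "e \<in> E" "s \<in> e"
  shows "e \<in> {{s, p}, {s, q}}"
proof -
  obtain a b where "e = {a, b}" using graph_edge_doubleton[OF graph assms(1)] by blast
  then obtain x where x: "e = {s, x}" using assms(2) by auto
  then have "x \<in> nbhd E s" using assms(1) by (simp add: mem_nbhd_iff')
  then show ?thesis using x nbhd_s by auto
qed

lemma rest_subset:
  assumes "is_cycle E c" "e \<in> rest c"
  shows "e \<in> E" "e \<subseteq> V - {s}"
proof -
  show e: "e \<in> E" using assms by (auto simp: rest_def is_cycle_iff)
  then have "s \<notin> e" using edge_at_s assms(2) by (auto simp: rest_def)
  then show "e \<subseteq> V - {s}" using graph_edge_doubleton[OF graph e] by auto
qed

lemma image_pq_notin_rest: "is_cycle E c \<Longrightarrow> {h p, h q} \<notin> (`) h ` rest c"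
proof
  assume c: "is_cycle E c" and "{h p, h q} \<in> (`) h ` rest c"
  then obtain e where e: "e \<in> rest c" "h ` e = h ` {p, q}" by auto
  moreover have "{p, q} \<subseteq> V - {s}" using p_q_in by blast
  ultimately have "e = {p, q}"
    using inj_on_image_eq_iff[OF inj rest_subset(2)[OF c e(1)], of "{p, q}"] by blast
  then show False using rest_subset(1)[OF c e(1)] not_adjacent by simp
qed

lemma is_cycle_map:
  assumes "distinct r" "set r \<subseteq> V - {s}" "length r \<ge> 3"
    and "\<And>e. e \<in> cycle_edges r \<Longrightarrow> e \<in> E \<or> e = {p, q}"
  shows "is_cycle E' (map h r)"
  unfolding is_cycle_iff
proof (intro conjI)
  show "distinct (map h r)" using assms(1,2) inj by (simp add: distinct_map inj_on_subset)
  show "cycle_edges (map h r) \<subseteq> E'"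
  proof
    fix e' assume "e' \<in> cycle_edges (map h r)"
    then obtain e where e: "e \<in> cycle_edges r" "e' = h ` e" by (auto simp: cycle_edges_map)
    then obtain a b where ab: "e = {a, b}" "a \<in> set r" "b \<in> set r" using cycle_edges_elem by blast
    then have "a \<noteq> s" "b \<noteq> s" using assms(2) by auto
    from assms(4)[OF e(1)] show "e' \<in> E'"
    proof
      assume "e \<in> E"
      then show ?thesis using edge_image ab(1) e(2) \<open>a \<noteq> s\<close> \<open>b \<noteq> s\<close> by simp
    qed (use e(2) image_pq in simp)
  qed
qed (use assms(3) in simp)

lemma cycle_avoiding_s:
  assumes c: "is_cycle E c" and "s \<notin> set c"
  shows "\<exists>d. is_cycle E' d \<and> cycle_edges d = image_edges c \<and> cycle_edges c = rest c"
proof -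
  have "{s, p} \<notin> cycle_edges c" "{s, q} \<notin> cycle_edges c"
    using assms(2) Union_cycle_edges[of c] by blast+
  then have rest: "rest c = cycle_edges c" by (auto simp: rest_def)
  have "is_cycle E' (map h c)"
    using c is_cycle_set_subset[OF graph c] assms(2)
    by (intro is_cycle_map) (auto simp: is_cycle_iff)
  then show ?thesis using assms(2) rest by (auto simp: image_edges_def cycle_edges_map)
qed

lemma cycle_through_s:
  assumes c: "is_cycle E c" and "s \<in> set c"
  obtains r where "distinct r" "set r \<subseteq> V - {s}" "length r \<ge> 3"
    "cycle_edges r = insert {p, q} (rest c)" "rest c \<subseteq> E"
    "cycle_edges c = rest c \<union> {{s, p}, {s, q}}"
proof -
  obtain r where r: "is_cycle E (s # r)" "cycle_edges (s # r) = cycle_edges c"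
    using is_cycle_rotate_to[OF assms] by blast
  have lr: "length r \<ge> 2" and dr: "distinct r" and sr: "s \<notin> set r" and er: "cycle_edges (s # r) \<subseteq> E"
    using r(1) by (auto simp: is_cycle_iff)
  have rne: "r \<noteq> []" using lr by auto
  have ce: "cycle_edges (s # r) = insert {last r, s} (insert {s, hd r} (path_edges r))"
    using rne by (rule cycle_edges_Cons)
  have "hd r \<in> nbhd E s" "last r \<in> nbhd E s" using er ce
    by (auto simp: mem_nbhd_iff mem_nbhd_iff' insert_commute)
  moreover have "hd r \<noteq> last r"
    using dr lr by (cases r; cases "tl r") auto
  ultimately have ends: "{last r, hd r} = {p, q}" "{{last r, s}, {s, hd r}} = {{s, p}, {s, q}}"
    using nbhd_s by (auto simp: insert_commute)
  have "{last r, s} \<notin> path_edges r" "{s, hd r} \<notin> path_edges r"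
    using sr path_edges_subset_set by blast+
  then have rest: "rest c = path_edges r"
    using r(2) ce ends(2)[symmetric] by (auto simp: rest_def)
  have l3: "length r \<ge> 3"
  proof (rule ccontr)
    assume "\<not> length r \<ge> 3"
    then have "length r = 2" using lr by simp
    then obtain x y where "r = [x, y]" by (cases r; cases "tl r") auto
    then show False using er ce ends(1) not_adjacent by (auto simp: insert_commute)
  qed
  have setr: "set r \<subseteq> V - {s}" using is_cycle_set_subset[OF graph r(1)] sr by auto
  have cer: "cycle_edges r = insert {p, q} (rest c)"
    using rne ends(1) rest by (simp add: cycle_edges_conv_path_edges)
  have "cycle_edges c = path_edges r \<union> {{last r, s}, {s, hd r}}" using r(2) ce by auto
  then have cec: "cycle_edges c = rest c \<union> {{s, p}, {s, q}}" using ends(2) rest by simp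
  have "rest c \<subseteq> E" using er ce rest by auto
  then show thesis by (rule that[OF dr setr l3 cer _ cec])
qed

lemma cycle_image:
  assumes c: "is_cycle E c"
  shows "\<exists>d. is_cycle E' d \<and> cycle_edges d = image_edges c"
proof (cases "s \<in> set c")
  case True
  obtain r where r: "distinct r" "set r \<subseteq> V - {s}" "length r \<ge> 3"
    "cycle_edges r = insert {p, q} (rest c)" "rest c \<subseteq> E"
    "cycle_edges c = rest c \<union> {{s, p}, {s, q}}"
    by (rule cycle_through_s[OF c True])
  have cycle: "is_cycle E' (map h r)"
  proof (rule is_cycle_map[OF r(1-3)])
    fix e assume "e \<in> cycle_edges r"
    then show "e \<in> E \<or> e = {p, q}" using r(4,5) by auto
  qed
  have "cycle_edges (map h r) = (`) h ` insert {p, q} (rest c)"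
    by (simp only: cycle_edges_map r(4))
  also have "\<dots> = image_edges c" using True by (simp add: image_edges_def)
  finally show ?thesis using cycle by blast
qed (use cycle_avoiding_s[OF c] in blast)

lemma cycle_edges_conv_rest:
  assumes c: "is_cycle E c"
  shows "cycle_edges c = rest c \<union> (if s \<in> set c then {{s, p}, {s, q}} else {})"
proof (cases "s \<in> set c")
  case True
  obtain r where "cycle_edges c = rest c \<union> {{s, p}, {s, q}}"
    by (rule cycle_through_s[OF c True])
  then show ?thesis using True by simp
qed (use cycle_avoiding_s[OF c] in auto)

lemma image_edges_determines_cycle:
  assumes c1: "is_cycle E c1" and c2: "is_cycle E c2" and eq: "image_edges c1 = image_edges c2"
  shows "cycle_edges c1 = cycle_edges c2"
proof -
  have through: "s \<in> set c \<longleftrightarrow> {h p, h q} \<in> image_edges c" if "is_cycle E c" for c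
    using image_pq_notin_rest[OF that] by (auto simp: image_edges_def)
  have rest: "(`) h ` rest c = image_edges c - {{h p, h q}}" if "is_cycle E c" for c
    using image_pq_notin_rest[OF that] by (auto simp: image_edges_def)
  have "rest c1 \<subseteq> Pow (V - {s})" "rest c2 \<subseteq> Pow (V - {s})"
    using rest_subset(2)[OF c1] rest_subset(2)[OF c2] by blast+
  moreover have "(`) h ` rest c1 = (`) h ` rest c2" using rest[OF c1] rest[OF c2] eq by simp
  ultimately have "rest c1 = rest c2"
    by (simp add: inj_on_image_eq_iff[OF inj_on_image_Pow[OF inj]])
  moreover have "s \<in> set c1 \<longleftrightarrow> s \<in> set c2" using through[OF c1] through[OF c2] eq by simp
  ultimately show ?thesis using cycle_edges_conv_rest[OF c1] cycle_edges_conv_rest[OF c2] by simp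
qed

lemma cycle_property:
  assumes "cycle_property E'"
  shows "cycle_property E"
  unfolding cycle_property_def
proof (intro ballI allI impI)
  fix e c1 c2
  assume "e \<in> E" and cc: "is_cycle E c1 \<and> is_cycle E c2 \<and> e \<in> cycle_edges c1 \<and> e \<in> cycle_edges c2"
  then have c1: "is_cycle E c1" and c2: "is_cycle E c2"
    and e1: "e \<in> cycle_edges c1" and e2: "e \<in> cycle_edges c2" by blast+
  obtain d1 where d1: "is_cycle E' d1" "cycle_edges d1 = image_edges c1"
    using cycle_image[OF c1] by blast
  obtain d2 where d2: "is_cycle E' d2" "cycle_edges d2 = image_edges c2"
    using cycle_image[OF c2] by blast
  have "\<exists>e'. e' \<in> image_edges c1 \<and> e' \<in> image_edges c2"
  proof (cases "s \<in> e")
    case True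
    then have "s \<in> set c1" "s \<in> set c2"
      using e1 e2 Union_cycle_edges[of c1] Union_cycle_edges[of c2] by blast+
    then show ?thesis by (intro exI[of _ "{h p, h q}"]) (simp add: image_edges_def)
  next
    case False
    then have "e \<in> rest c1" "e \<in> rest c2" using e1 e2 by (auto simp: rest_def)
    then show ?thesis by (intro exI[of _ "h ` e"]) (simp add: image_edges_def)
  qed
  then have "image_edges c1 = image_edges c2"
    using cycle_propertyD[OF assms d1(1) d2(1)] d1(2) d2(2) by auto
  then show "cycle_edges c1 = cycle_edges c2" by (rule image_edges_determines_cycle[OF c1 c2])
qed

end

section \<open>Uncontracting a pendant edge\<close>

locale pendant_edge =
  fixes V :: "'a set" and E F :: "'a set set" and a b :: 'a
  assumes graph: "graph V E" and F_sub: "F \<subseteq> E" and ab: "{a, b} \<in> F"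
    and pendant: "\<And>z. {b, z} \<in> F \<Longrightarrow> z = a"
begin

abbreviation "F' \<equiv> F - {{a, b}}"
abbreviation "X \<equiv> witness_set V F a"
abbreviation "X\<^sub>a \<equiv> witness_set V F' a"

lemma a_b: "a \<in> V" "b \<in> V" "a \<noteq> b"
  using graph_edgeD[OF graph] ab F_sub by blast+

lemma F_edge_in_V: "{y, z} \<in> F \<Longrightarrow> z \<in> V"
  using graph_edgeD[OF graph] F_sub by blast

lemma witness_set_b: "witness_set V F' b = {b}"
proof (rule witness_set_isolated[OF a_b(2)])
  fix z show "{b, z} \<notin> F'" using pendant by (auto simp: insert_commute)
qed

lemma b_notin_X\<^sub>a: "b \<notin> X\<^sub>a"
proof
  assume "b \<in> X\<^sub>a"
  then have "(a, b) \<in> (frel F')\<^sup>*" by (simp add: witness_set_def)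
  then obtain y where "(y, b) \<in> frel F'" using a_b(3) by (blast elim: rtranclE)
  then have "{b, y} \<in> F" "{b, y} \<noteq> {a, b}" by (auto simp: insert_commute)
  then show False using pendant by (auto simp: insert_commute)
qed

lemma a_b_in_X: "a \<in> X" "b \<in> X"
  using ab a_b by (simp_all add: witness_set_def r_into_rtrancl)

lemma X_eq: "X = insert b X\<^sub>a"
proof
  have "a \<in> X\<^sub>a" by (rule witness_set_self[OF a_b(1)])
  then show "X \<subseteq> insert b X\<^sub>a"
  proof (rule witness_set_closed[OF insertI2])
    fix y z assume y: "y \<in> insert b X\<^sub>a" and yz: "{y, z} \<in> F"
    show "z \<in> insert b X\<^sub>a"
    proof (cases "{y, z} = {a, b}")
      case False
      then have "y = b \<longrightarrow> z = a" using pendant yz by blast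
      then show ?thesis using y yz False witness_set_step[of y V F' a z] F_edge_in_V \<open>a \<in> X\<^sub>a\<close>
        by auto
    qed (use \<open>a \<in> X\<^sub>a\<close> in \<open>auto simp: doubleton_eq_iff\<close>)
  qed
  show "insert b X\<^sub>a \<subseteq> X" using a_b_in_X(2) witness_set_mono[of F' F V a] by blast
qed

lemma witness_set_outside_X:
  assumes "x \<in> V" "x \<notin> X"
  shows "witness_set V F' x = witness_set V F x"
proof
  show "witness_set V F' x \<subseteq> witness_set V F x" by (rule witness_set_mono) blast
  show "witness_set V F x \<subseteq> witness_set V F' x"
  proof (rule witness_set_closed[OF witness_set_self[OF assms(1)]])
    fix y z assume y: "y \<in> witness_set V F' x" and yz: "{y, z} \<in> F"
    have "{y, z} \<noteq> {a, b}"
    proof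
      assume "{y, z} = {a, b}"
      then have "y \<in> X" using a_b_in_X by (auto simp: doubleton_eq_iff)
      then have "witness_set V F y = X" by (rule witness_set_eq)
      moreover have "y \<in> witness_set V F x" using y witness_set_mono[of F' F V x] by blast
      then have "witness_set V F y = witness_set V F x" by (rule witness_set_eq)
      ultimately show False using assms witness_set_self[OF assms(1), of F] by simp
    qed
    then have "{y, z} \<in> F'" using yz by blast
    then show "z \<in> witness_set V F' x" by (rule witness_set_step[OF y _ F_edge_in_V[OF yz]])
  qed
qed

lemma witness_minus_edge: "witness V F' = insert {b} (insert X\<^sub>a (witness V F - {X}))"
proof (intro equalityI subsetI)
  fix D assume "D \<in> witness V F'"
  then obtain x where x: "x \<in> V" "D = witness_set V F' x" by (auto simp: witness_conv_witness_set)
  have "x \<in> X \<longrightarrow> x = b \<or> x \<in> X\<^sub>a" using X_eq by simp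
  then consider "x = b" | "x \<in> X\<^sub>a" | "x \<notin> X" by blast
  then show "D \<in> insert {b} (insert X\<^sub>a (witness V F - {X}))"
  proof cases
    case 2 then show ?thesis using x(2) witness_set_eq[OF 2] by simp
  next
    case 3
    then have "witness_set V F x \<noteq> X" using witness_set_self[OF x(1), of F] by blast
    then show ?thesis
      using x(2) witness_set_outside_X[OF x(1) 3] witness_set_in_witness[OF x(1), of F] by simp
  qed (use x witness_set_b in simp)
next
  fix D assume D: "D \<in> insert {b} (insert X\<^sub>a (witness V F - {X}))"
  show "D \<in> witness V F'"
  proof (cases "D = {b} \<or> D = X\<^sub>a")
    case True
    then show ?thesis
      using witness_set_in_witness[OF a_b(1), of F'] witness_set_in_witness[OF a_b(2), of F']
        witness_set_b by auto
  next
    case False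
    then have "D \<in> witness V F" "D \<noteq> X" using D by blast+
    then obtain x where x: "x \<in> V" "D = witness_set V F x" by (auto simp: witness_conv_witness_set)
    have "x \<notin> X"
    proof
      assume "x \<in> X"
      then have "witness_set V F x = X" by (rule witness_set_eq)
      then show False using x(2) \<open>D \<noteq> X\<close> by simp
    qed
    then show ?thesis
      using x witness_set_outside_X[OF x(1)] witness_set_in_witness[OF x(1), of F'] by simp
  qed
qed

end

text \<open>Deleting the pendant edge \<open>ab\<close> from \<open>F\<close> splits the witness set \<open>X\<close> of \<open>a\<close> into \<open>X\<^sub>a\<close>
  and \<open>{b}\<close>. If \<open>b\<close> only sees \<open>X\<^sub>a\<close> and one further witness set \<open>N\<close>, and \<open>X\<^sub>a\<close> does not see \<open>N\<close>,
  then the new contraction arises from the old one by subdividing the edge \<open>XN\<close>.\<close>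

locale pendant_edge_subdividing = pendant_edge +
  fixes N :: "'a set" and c :: 'a
  assumes N_in: "N \<in> witness V F" and b_notin_N: "b \<notin> N" and c_in_N: "c \<in> N" and bc: "{b, c} \<in> E"
    and nbhd_b: "nbhd E b \<subseteq> witness_set V (F - {{a, b}}) a \<union> N"
    and no_edge: "\<And>x y. x \<in> witness_set V (F - {{a, b}}) a \<Longrightarrow> y \<in> N \<Longrightarrow> {x, y} \<notin> E"
begin

lemma N_ne_X: "N \<noteq> X"
  using a_b_in_X(2) b_notin_N by blast

lemma a_notin_N: "a \<notin> N"
  using witness_eq_witness_set[OF N_in] N_ne_X by blast

lemma X\<^sub>a_ne: "X\<^sub>a \<noteq> {b}" "X\<^sub>a \<noteq> N"
  using witness_set_self[OF a_b(1), of F'] a_b(3) a_notin_N by auto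

lemma in_witness_minus: "{b} \<in> witness V F'" "X\<^sub>a \<in> witness V F'" "N \<in> witness V F'"
  using witness_minus_edge N_in N_ne_X by auto

lemma nbhd_singleton_b: "nbhd (contr_edges V E F') {b} = {X\<^sub>a, N}"
proof (intro equalityI subsetI)
  fix D assume "D \<in> nbhd (contr_edges V E F') {b}"
  then have D: "D \<in> witness V F'" "\<exists>d\<in>D. {d, b} \<in> E" by (auto simp: mem_nbhd_iff contr_edges_iff)
  then obtain d where d: "d \<in> D" "d \<in> nbhd E b" by (auto simp: mem_nbhd_iff)
  have "D = witness_set V F' d" by (rule witness_eq_witness_set[OF D(1) d(1)])
  moreover have "d \<in> X\<^sub>a \<or> d \<in> N" using d(2) nbhd_b by blast
  ultimately show "D \<in> {X\<^sub>a, N}"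
    using witness_set_eq[of d V F' a] witness_eq_witness_set[OF in_witness_minus(3)] by auto
next
  have "{a, b} \<in> E" using ab F_sub by blast
  then have "{X\<^sub>a, {b}} \<in> contr_edges V E F'"
    using in_witness_minus(1,2) X\<^sub>a_ne(1) witness_set_self[OF a_b(1), of F']
    by (auto simp: contr_edges_iff)
  moreover have "{N, {b}} \<in> contr_edges V E F'"
    using in_witness_minus(1,3) b_notin_N c_in_N bc by (auto simp: contr_edges_iff insert_commute)
  ultimately show "D \<in> nbhd (contr_edges V E F') {b}" if "D \<in> {X\<^sub>a, N}" for D
    using that by (auto simp: mem_nbhd_iff)
qed

lemma X\<^sub>a_N_not_adjacent: "{X\<^sub>a, N} \<notin> contr_edges V E F'"
  using no_edge by (auto simp: contr_edges_iff)

definition merge :: "'a set \<Rightarrow> 'a set" where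
  "merge D = (if D = X\<^sub>a then X else D)"

lemma merge_subset: "D \<subseteq> merge D"
  using X_eq by (auto simp: merge_def)

lemma merge_in_witness: "D \<in> witness V F' - {{b}} \<Longrightarrow> merge D \<in> witness V F"
  using witness_minus_edge witness_set_in_witness[OF a_b(1), of F] by (auto simp: merge_def)

lemma inj_merge: "inj_on merge (witness V F' - {{b}})"
  using witness_minus_edge by (auto simp: inj_on_def merge_def)

lemma subdivision:
  "edge_subdivision (witness V F') (contr_edges V E F') {b} X\<^sub>a N merge (contr_edges V E F)"
proof
  have "finite V" using graph by (simp add: graph_def)
  then show "graph (witness V F') (contr_edges V E F')" by (rule graph_contr)
  show "{merge X\<^sub>a, merge N} \<in> contr_edges V E F"
    using X\<^sub>a_ne(2) N_in N_ne_X witness_set_in_witness[OF a_b(1), of F] a_b_in_X(2) c_in_N bc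
    by (auto simp: merge_def contr_edges_iff)
  fix u v assume uv: "{u, v} \<in> contr_edges V E F'" "u \<noteq> {b}" "v \<noteq> {b}"
  then have "u \<in> witness V F' - {{b}}" "v \<in> witness V F' - {{b}}" "u \<noteq> v"
    by (auto simp: contr_edges_iff)
  moreover have "\<exists>x\<in>merge u. \<exists>y\<in>merge v. {x, y} \<in> E"
    using uv(1) merge_subset[of u] merge_subset[of v] by (auto simp: contr_edges_iff)
  ultimately show "{merge u, merge v} \<in> contr_edges V E F"
    using merge_in_witness inj_merge by (auto simp: contr_edges_iff inj_on_eq_iff)
qed (use nbhd_singleton_b X\<^sub>a_ne X\<^sub>a_N_not_adjacent inj_merge in auto)

lemma cactus_minus_edge:
  assumes "connected_on E V" "cactus (witness V F) (contr_edges V E F)"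
  shows "cactus (witness V F') (contr_edges V E F')"
  using edge_subdivision.cycle_property[OF subdivision] edge_subdivision.graph[OF subdivision]
    connected_on_contr[OF assms(1)] assms(2)
  by (simp add: cactus_iff)

end

section \<open>Cable paths\<close>

lemma cable_path_rev:
  assumes "cable_path V E P"
  shows "cable_path V E (rev P)"
proof -
  let ?n = "length P"
  have path: "is_path V E P"
    and inner: "\<And>i. 0 < i \<Longrightarrow> i + 1 < ?n \<Longrightarrow> nbhd E (P ! i) = {P ! (i - 1), P ! (i + 1)}"
    using assms unfolding cable_path_def by blast+
  have edge: "\<And>i. i + 1 < ?n \<Longrightarrow> {P ! i, P ! (i + 1)} \<in> E"
    using path unfolding is_path_def by blast
  have "{rev P ! i, rev P ! (i + 1)} \<in> E" if "i + 1 < ?n" for i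
  proof -
    have "?n - Suc i = Suc (?n - Suc (Suc i))" "?n - Suc (Suc i) + 1 < ?n" using that by arith+
    then show ?thesis using that edge[of "?n - Suc (Suc i)"] by (simp add: rev_nth insert_commute)
  qed
  moreover have "nbhd E (rev P ! i) = {rev P ! (i - 1), rev P ! (i + 1)}"
    if "0 < i" "i + 1 < ?n" for i
  proof -
    have "?n - i = Suc (?n - Suc i)" "?n - Suc (i - 1) = Suc (?n - Suc i)"
      "?n - Suc (?n - Suc i) = i" "0 < ?n - Suc i" "?n - Suc i + 1 < ?n" using that by arith+
    then show ?thesis using that inner[of "?n - Suc i"] by (simp add: rev_nth insert_commute)
  qed
  ultimately show ?thesis using path unfolding cable_path_def is_path_def by simp
qed

lemma max_cable_path_rev: "max_cable_path V E P \<Longrightarrow> max_cable_path V E (rev P)"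
  unfolding max_cable_path_def using cable_path_rev by fastforce

lemma cable_path_Cons:
  assumes P: "cable_path V E P" "length P \<ge> 2"
    and z: "z \<in> V" "z \<notin> set P" "nbhd E (hd P) = {z, P ! 1}"
  shows "cable_path V E (z # P)"
proof -
  have path: "is_path V E P" and inner: "\<forall>i. 0 < i \<and> i + 1 < length P \<longrightarrow>
      nbhd E (P ! i) = {P ! (i - 1), P ! (i + 1)}"
    using P(1) unfolding cable_path_def by blast+
  have "P \<noteq> []" using P(2) by auto
  then have hd: "hd P = P ! 0" by (simp add: hd_conv_nth)
  have "{z, P ! 0} \<in> E" using z(3) hd by (simp add: mem_nbhd_iff[symmetric])
  then have "{(z # P) ! i, (z # P) ! (i + 1)} \<in> E" if "i + 1 < length (z # P)" for i
    using that path by (cases i) (auto simp: is_path_def insert_commute)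
  then have "is_path V E (z # P)" using path z(1,2) by (simp add: is_path_def)
  moreover have "nbhd E ((z # P) ! i) = {(z # P) ! (i - 1), (z # P) ! (i + 1)}"
    if "0 < i" "i + 1 < length (z # P)" for i
  proof (cases "i = 1")
    case True then show ?thesis using z(3) hd by simp
  next
    case False
    then show ?thesis using that inner[rule_format, of "i - 1"] by (cases i) auto
  qed
  ultimately show ?thesis unfolding cable_path_def by blast
qed

lemma two_connected_other_neighbour:
  assumes G: "two_connected V E" and uv: "{u, v} \<in> E"
  shows "\<exists>z. {u, z} \<in> E \<and> z \<noteq> v"
proof -
  have "graph V E" using G by (simp add: two_connected_def)
  then have u: "u \<in> V - {v}" and v: "v \<in> V" using graph_edgeD[OF _ uv] by auto
  have "card {u, v} \<le> 2" by (cases "u = v") auto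
  then have "\<not> V \<subseteq> {u, v}" using G card_mono[of "{u, v}" V] by (auto simp: two_connected_def)
  then obtain w where w: "w \<in> V - {v}" "w \<noteq> u" by blast
  have "(u, w) \<in> (edge_rel E (V - {v}))\<^sup>*"
    using G u w(1) v by (auto simp: two_connected_def connected_on_def)
  then obtain z where "(u, z) \<in> edge_rel E (V - {v})" using w(2) by (blast elim: converse_rtranclE)
  then show ?thesis by (auto simp: edge_rel_def)
qed

lemma max_cable_path_two_neighbours:
  assumes G: "two_connected V E" and P: "max_cable_path V E P" "length P \<ge> 2"
    and nbhd: "nbhd E (hd P) \<subseteq> Y \<union> {P ! 1}" and disj: "set P \<inter> Y = {}"
  shows "\<exists>y1 y2. y1 \<noteq> y2 \<and> {y1, y2} \<subseteq> Y \<inter> nbhd E (hd P)"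
proof (rule ccontr)
  assume few: "\<not> ?thesis"
  have cable: "cable_path V E P" using P(1) by (simp add: max_cable_path_def)
  moreover have "P \<noteq> []" using P(2) by auto
  ultimately have "{hd P, P ! 1} \<in> E"
    using P(2) by (auto simp: cable_path_def is_path_def hd_conv_nth)
  then obtain z where z: "{hd P, z} \<in> E" "z \<noteq> P ! 1"
    using two_connected_other_neighbour[OF G] by blast
  then have zY: "z \<in> Y \<inter> nbhd E (hd P)" using nbhd by (auto simp: mem_nbhd_iff')
  have "nbhd E (hd P) = {z, P ! 1}"
  proof (intro equalityI subsetI)
    fix x assume x: "x \<in> nbhd E (hd P)"
    then have "x \<in> Y \<or> x = P ! 1" using nbhd by blast
    then show "x \<in> {z, P ! 1}" using few x zY by blast
  qed (use zY \<open>{hd P, P ! 1} \<in> E\<close> in \<open>auto simp: mem_nbhd_iff'\<close>)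
  moreover have "z \<in> V" using G graph_edgeD[OF _ z(1)] by (auto simp: two_connected_def)
  moreover have "z \<notin> set P" using zY disj by blast
  ultimately have "cable_path V E (z # P)" using cable P(2) by (intro cable_path_Cons)
  moreover have "sublist P (z # P)" by (simp add: sublist_Cons_right)
  ultimately show False using P(1) unfolding max_cable_path_def by force
qed

section \<open>A cable path between two monochromatic components\<close>

locale separating_cable =
  fixes V :: "'a set" and E F :: "'a set set" and f :: "'a \<Rightarrow> nat" and Y Z :: "'a set"
    and P :: "'a list"
  assumes two_connected: "two_connected V E"
    and F_sub: "F \<subseteq> E" and cactus: "cactus (witness V F) (contr_edges V E F)"
    and compatible: "compatible V E F f"
    and Y: "mono_component V E f Y" and Z: "mono_component V E f Z" and Y_Z: "Y \<inter> Z = {}"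
    and length_P: "length P \<ge> 2" and max_cable: "max_cable_path V E P"
    and P_Y: "set P \<inter> Y = {}" and P_Z: "set P \<inter> Z = {}"
    and nbhd_hd: "nbhd E (hd P) \<subseteq> Y \<union> {P ! 1}"
    and nbhd_last: "nbhd E (last P) \<subseteq> Z \<union> {P ! (length P - 2)}"
begin

abbreviation "l \<equiv> length P"
abbreviation "W \<equiv> witness_set V F"

lemma graph: "graph V E"
  using two_connected by (simp add: two_connected_def)

lemma Y_sub: "Y \<subseteq> V" and Z_sub: "Z \<subseteq> V"
  using Y Z by (simp_all add: mono_component_def)

lemma P_ne: "P \<noteq> []"
  using length_P by auto

lemma hd_P: "hd P = P ! 0" and last_P: "last P = P ! (l - 1)"
  using P_ne by (simp_all add: hd_conv_nth last_conv_nth)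

lemma P_path: "distinct P" "set P \<subseteq> V" "\<And>i. i + 1 < l \<Longrightarrow> {P ! i, P ! (i + 1)} \<in> E"
  using max_cable by (auto simp: max_cable_path_def cable_path_def is_path_def)

lemma nbhd_inner: "0 < i \<Longrightarrow> i + 1 < l \<Longrightarrow> nbhd E (P ! i) = {P ! (i - 1), P ! (i + 1)}"
  using max_cable by (simp add: max_cable_path_def cable_path_def)

lemma P_index_eq: "i < l \<Longrightarrow> j < l \<Longrightarrow> P ! i = P ! j \<longleftrightarrow> i = j"
  using P_path(1) by (simp add: nth_eq_iff_index_eq)

lemma nbhd_off_P:
  assumes "j < l" "y \<in> nbhd E (P ! j)" "y \<notin> set P"
  shows "(j = 0 \<and> y \<in> Y) \<or> (j = l - 1 \<and> y \<in> Z)"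
proof -
  consider "j = 0" | "0 < j \<and> j + 1 < l" | "j = l - 1" using assms(1) by linarith
  then show ?thesis
  proof cases
    case 2
    then have "y \<in> {P ! (j - 1), P ! (j + 1)}" using nbhd_inner assms(2) by blast
    then show ?thesis using 2 assms(3) by auto
  qed (use assms nbhd_hd nbhd_last hd_P last_P length_P in auto)
qed

lemma nbhd_on_P:
  assumes "i < l" "j < l" "P ! j \<in> nbhd E (P ! i)"
  shows "j = i + 1 \<or> i = j + 1"
proof -
  consider "i = 0" | "0 < i \<and> i + 1 < l" | "i = l - 1 \<and> i \<noteq> 0" using assms(1) by linarith
  then show ?thesis
  proof cases
    case 1
    then have "P ! j = P ! 1" using nbhd_hd hd_P assms(3) P_Y nth_mem[OF assms(2)] by auto
    then show ?thesis using 1 P_index_eq assms(2) length_P by auto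
  next
    case 2
    then have "P ! j = P ! (i - 1) \<or> P ! j = P ! (i + 1)" using nbhd_inner assms(3) by blast
    then show ?thesis using 2 P_index_eq assms(2) by auto
  next
    case 3
    then have "P ! j = P ! (l - 2)" using nbhd_last last_P assms(3) P_Z nth_mem[OF assms(2)] by auto
    then show ?thesis using 3 P_index_eq assms(2) length_P by auto
  qed
qed

lemma witness_set_P: "x \<in> set P \<Longrightarrow> W x \<subseteq> set P"
proof (rule witness_set_closed)
  fix y z assume y: "y \<in> set P" and yz: "{y, z} \<in> F"
  show "z \<in> set P"
  proof (rule ccontr)
    assume z: "z \<notin> set P"
    have e: "{z, y} \<in> E" using yz F_sub by (auto simp: insert_commute)
    then have "y \<in> V" "z \<in> V" using graph_edgeD[OF graph] by blast+
    then have "f y = f z" using compatible_F_edge_same_colour[OF compatible _ _ yz] by blast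
    obtain j where "j < l" "y = P ! j" using y by (auto simp: in_set_conv_nth)
    then have "z \<in> Y \<or> z \<in> Z" using nbhd_off_P z e by (auto simp: mem_nbhd_iff)
    then have "y \<in> Y \<or> y \<in> Z"
      using mono_component_edge_closed[OF Y _ e] mono_component_edge_closed[OF Z _ e]
        \<open>y \<in> V\<close> \<open>f y = f z\<close> by blast
    then show False using y P_Y P_Z by blast
  qed
qed

lemma witness_set_Y: "x \<in> Y \<Longrightarrow> W x \<subseteq> Y" and witness_set_Z: "x \<in> Z \<Longrightarrow> W x \<subseteq> Z"
  using witness_set_subset_mono_component[OF graph F_sub compatible] Y Z by blast+

lemma rev_separating_cable: "separating_cable V E F f Z Y (rev P)"
proof -
  have "rev P ! 1 = P ! (l - 2)" "rev P ! (l - 2) = P ! 1"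
    using length_P by (simp_all add: rev_nth numeral_2_eq_2 Suc_diff_Suc)
  then show ?thesis
    using two_connected F_sub cactus compatible Y Z Y_Z length_P max_cable_path_rev[OF max_cable]
      P_Y P_Z nbhd_hd nbhd_last P_ne
    by unfold_locales (auto simp: hd_rev last_rev)
qed

lemma hd_Y_neighbours: "\<exists>y1 y2. y1 \<noteq> y2 \<and> {y1, y2} \<subseteq> Y \<inter> nbhd E (hd P)"
  by (rule max_cable_path_two_neighbours[OF two_connected max_cable length_P nbhd_hd P_Y])

lemma walk_Y_Z_avoiding_P:
  assumes y: "y \<in> Y" and z: "z \<in> Z"
  shows "(y, z) \<in> (edge_rel E (V - set P))\<^sup>*"
proof -
  define U where "U = {w \<in> V - set P. (y, w) \<in> (edge_rel E (V - set P))\<^sup>*}"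
  have "U \<inter> Z \<noteq> {}"
  proof
    assume no_Z: "U \<inter> Z = {}"
    have "hd P \<in> V" using P_path(2) P_ne by auto
    then have "connected_on E (V - {hd P})" using two_connected by (simp add: two_connected_def)
    moreover have "y \<in> V - {hd P}" "z \<in> V - {hd P}"
      using y z Y_sub Z_sub P_Y P_Z P_ne by (auto dest: hd_in_set)
    ultimately have "(y, z) \<in> (edge_rel E (V - {hd P}))\<^sup>*" by (simp add: connected_on_def)
    moreover have "y \<in> U" using y Y_sub P_Y by (auto simp: U_def)
    ultimately have "z \<in> U"
    proof (rule rtrancl_edge_rel_closed)
      fix u w assume u: "u \<in> U" and w: "w \<in> V - {hd P}" and uw: "{u, w} \<in> E"
      show "w \<in> U"
      proof (cases "w \<in> set P")
        case True
        then obtain j where j: "j < l" "w = P ! j" by (auto simp: in_set_conv_nth)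
        have "j \<noteq> 0"
        proof
          assume "j = 0"
          then show False using w j(2) hd_P by simp
        qed
        then have "u \<in> Z" using nbhd_off_P[OF j(1)] j(2) u uw by (auto simp: U_def mem_nbhd_iff)
        then show ?thesis using u no_Z by blast
      qed (use u w uw in \<open>auto simp: U_def edge_rel_def intro: rtrancl_into_rtrancl\<close>)
    qed
    then show False using z no_Z by blast
  qed
  then obtain z' where z': "z' \<in> Z" "(y, z') \<in> (edge_rel E (V - set P))\<^sup>*" by (auto simp: U_def)
  have "(z', z) \<in> (edge_rel E Z)\<^sup>*" using Z z z'(1)
    by (simp add: mono_component_def connected_on_def)
  then have "(z', z) \<in> (edge_rel E (V - set P))\<^sup>*"
    by (rule rtrancl_edge_rel_mono[rotated]) (use Z_sub P_Z in blast)
  then show ?thesis using z'(2) by (rule rtrancl_trans[rotated])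
qed

lemma last_Z_neighbours: "\<exists>z1 z2. z1 \<noteq> z2 \<and> {z1, z2} \<subseteq> Z \<inter> nbhd E (last P)"
  using separating_cable.hd_Y_neighbours[OF rev_separating_cable] P_ne by (simp add: hd_rev)

lemma walk_last_hd: "(last P, hd P) \<in> (edge_rel E (set P))\<^sup>*"
proof -
  have "path_edges P \<subseteq> E" using P_path(3) by (auto simp: path_edges_conv_nth)
  then show ?thesis
    by (rule rtrancl_edge_rel_sym[OF path_edges_rtrancl_edge_rel[OF P_ne _ order_refl]])
qed

text \<open>Leave \<open>Y\<close> towards \<open>Z\<close> avoiding \<open>P\<close>, then return along \<open>P\<close> until \<open>X\<close> is hit.\<close>

lemma exit_to_P_subset:
  assumes "hd P \<in> X" "X \<subseteq> set P" "y \<in> Y"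
  shows "\<exists>u x. u \<in> V - X \<and> u \<notin> Y \<and> x \<in> X \<and> {u, x} \<in> E \<and> (y, u) \<in> (edge_rel E (V - X))\<^sup>*"
proof -
  obtain z where z: "z \<in> Z" "z \<in> nbhd E (last P)" using last_Z_neighbours by blast
  have "z \<in> V" "z \<notin> set P" using z Z_sub P_Z by auto
  have "(z, last P) \<in> edge_rel E (insert z (set P))"
    using z(2) P_ne by (simp add: edge_rel_def mem_nbhd_iff)
  moreover have "(last P, hd P) \<in> (edge_rel E (insert z (set P)))\<^sup>*"
    using walk_last_hd by (rule rtrancl_edge_rel_mono[rotated]) blast
  ultimately have walk: "(z, hd P) \<in> (edge_rel E (insert z (set P)))\<^sup>*"
    by (rule converse_rtrancl_into_rtrancl)
  have "z \<in> insert z (set P) - X" using \<open>z \<notin> set P\<close> assms(2) by blast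
  then obtain u x where u: "(z, u) \<in> (edge_rel E (insert z (set P) - X))\<^sup>*"
    "u \<in> insert z (set P) - X" "x \<in> X \<inter> insert z (set P)" "{u, x} \<in> E"
    using rtrancl_edge_rel_first_entry[OF walk _ assms(1)] by blast
  have "(y, z) \<in> (edge_rel E (V - X))\<^sup>*"
    using walk_Y_Z_avoiding_P[OF assms(3) z(1)]
    by (rule rtrancl_edge_rel_mono[rotated]) (use assms(2) in blast)
  moreover have "(z, u) \<in> (edge_rel E (V - X))\<^sup>*"
    using u(1) by (rule rtrancl_edge_rel_mono[rotated]) (use \<open>z \<in> V\<close> P_path(2) in blast)
  ultimately have "(y, u) \<in> (edge_rel E (V - X))\<^sup>*" by (rule rtrancl_trans)
  moreover have "u \<in> V - X" "u \<notin> Y" using u(2) \<open>z \<in> V\<close> z(1) P_path(2) Y_Z P_Y by auto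
  ultimately show ?thesis using u(3,4) by blast
qed

lemma hd_neighbours_same_witness:
  assumes y1: "y1 \<in> Y \<inter> nbhd E (hd P)" and y2: "y2 \<in> Y \<inter> nbhd E (hd P)"
  shows "W y1 = W y2"
proof (rule ccontr)
  assume ne: "W y1 \<noteq> W y2"
  define X where "X = W (hd P)"
  have "hd P \<in> set P" using P_ne by simp
  then have hd_V: "hd P \<in> V" and X_P: "X \<subseteq> set P" and hd_X: "hd P \<in> X"
    using P_path(2) witness_set_P witness_set_self[of "hd P" V F] by (auto simp: X_def)
  have y_V: "y1 \<in> V" "y2 \<in> V" and y_X: "y1 \<notin> X" "y2 \<notin> X" using y1 y2 Y_sub X_P P_Y by auto
  obtain u x where u: "u \<in> V - X" "u \<notin> Y" "x \<in> X" "{u, x} \<in> E" "(y1, u) \<in> (edge_rel E (V - X))\<^sup>*"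
    using exit_to_P_subset[OF hd_X X_P] y1 by blast
  let ?S\<^sub>Y = "{D \<in> witness V F. D \<subseteq> Y}" and ?S\<^sub>X = "witness V F - {X}"
  have walk_u: "(W y1, W u) \<in> (edge_rel (contr_edges V E F) ?S\<^sub>X)\<^sup>*"
    using u(5) by (rule rtrancl_edge_rel_contr_avoiding)
  have walk_y2: "(W y1, W y2) \<in> (edge_rel (contr_edges V E F) ?S\<^sub>Y)\<^sup>*"
    using rtrancl_edge_rel_contr_mono_component[OF graph F_sub compatible Y] y1 y2 by blast
  have edge_y1: "{X, W y1} \<in> contr_edges V E F"
    using contr_edgeI[OF hd_V y_V(1), of E F] y1 y_X by (simp add: X_def mem_nbhd_iff')
  have edge_y2: "{W y2, X} \<in> contr_edges V E F"
    using contr_edgeI[OF hd_V y_V(2), of E F] y2 y_X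
    by (simp add: X_def mem_nbhd_iff' insert_commute)
  have edge_u: "{W u, X} \<in> contr_edges V E F"
  proof -
    have "x \<in> V" using u(3) X_P P_path(2) by blast
    moreover have "W x = X" using witness_set_eq[of x V F "hd P"] u(3) by (simp add: X_def)
    ultimately show ?thesis using contr_edgeI[of x V u E F] u(1,4) by (simp add: insert_commute)
  qed
  have u_W: "u \<in> W u" "u \<notin> W y1" using witness_set_self[of u V F] witness_set_Y[of y1] y1 u(1,2)
    by auto
  have "X \<notin> ?S\<^sub>Y" using hd_X \<open>hd P \<in> set P\<close> P_Y by blast
  moreover have "W y1 \<in> ?S\<^sub>Y" "W y1 \<in> ?S\<^sub>X"
    using witness_set_in_witness[of y1 V F] witness_set_Y[of y1] witness_set_self[of y1 V F]
      y1 y_V y_X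
    by auto
  moreover have "cycle_property (contr_edges V E F)" using cactus by (simp add: cactus_iff)
  ultimately have "W u \<in> ?S\<^sub>Y"
    using u_W cycle_property_detour[OF _ _ _ _ _ edge_y1 edge_y2 edge_u ne _ walk_y2 walk_u]
    by blast
  then show False using u(2) u_W by blast
qed

lemma last_neighbours_same_witness:
  assumes "z1 \<in> Z \<inter> nbhd E (last P)" "z2 \<in> Z \<inter> nbhd E (last P)"
  shows "W z1 = W z2"
proof -
  interpret rev: separating_cable V E F f Z Y "rev P" by (rule rev_separating_cable)
  show ?thesis by (rule rev.hd_neighbours_same_witness) (use assms P_ne in \<open>simp_all add: hd_rev\<close>)
qed

lemma big_witness_set_Y: "\<exists>D\<in>witness V F. card D \<ge> 2 \<and> D \<subseteq> Y"
proof -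
  obtain y1 y2 where y: "y1 \<noteq> y2" "{y1, y2} \<subseteq> Y \<inter> nbhd E (hd P)" using hd_Y_neighbours by blast
  then have "y1 \<in> V" "{y1, y2} \<subseteq> W y1"
    using hd_neighbours_same_witness[of y1 y2] witness_set_self[of _ V F] Y_sub by auto
  moreover have "finite (W y1)"
    using graph finite_subset[OF witness_set_subset[of V F y1]] by (simp add: graph_def)
  ultimately have "card (W y1) \<ge> 2" using y(1) card_mono[of "W y1" "{y1, y2}"] by simp
  moreover have "W y1 \<subseteq> Y" using witness_set_Y[of y1] y(2) by blast
  ultimately show ?thesis using witness_set_in_witness[OF \<open>y1 \<in> V\<close>, of F] by blast
qed

lemma big_witness_set_Z: "\<exists>D\<in>witness V F. card D \<ge> 2 \<and> D \<subseteq> Z"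
  by (rule separating_cable.big_witness_set_Y[OF rev_separating_cable])

lemma F_edge_on_P:
  assumes "j < l" "{P ! j, y} \<in> F"
  shows "\<exists>m. m + 1 < l \<and> {P ! j, y} = {P ! m, P ! (m + 1)}"
proof -
  have Pj: "P ! j \<in> set P" "P ! j \<in> V" using assms(1) P_path(2) by auto
  have "{P ! j, y} \<in> E" using assms(2) F_sub by blast
  then have "y \<in> V" using graph_edgeD[OF graph] by blast
  then have "y \<in> W (P ! j)" using witness_set_step[OF witness_set_self[OF Pj(2)] assms(2)] by blast
  then have "y \<in> set P" using witness_set_P[OF Pj(1)] by blast
  then obtain i where i: "i < l" "y = P ! i" by (metis in_set_conv_nth)
  then have "i = j + 1 \<or> j = i + 1"
    using nbhd_on_P[OF assms(1) i(1)] \<open>{P ! j, y} \<in> E\<close> by (simp add: mem_nbhd_iff')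
  then show ?thesis using assms(1) i by (auto simp: insert_commute)
qed

lemma last_F_edge_on_P:
  assumes "v \<in> set P" "{v} \<notin> witness V F"
  obtains k where "k + 1 < l" "{P ! k, P ! (k + 1)} \<in> F"
    "\<And>m. m + 1 < l \<Longrightarrow> {P ! m, P ! (m + 1)} \<in> F \<Longrightarrow> m \<le> k"
proof -
  let ?K = "{m. m + 1 < l \<and> {P ! m, P ! (m + 1)} \<in> F}"
  have v: "v \<in> V" using assms(1) P_path(2) by blast
  then have "W v \<noteq> {v}" using assms(2) witness_set_in_witness by metis
  then obtain w where "w \<in> W v" "w \<noteq> v" using witness_set_self[OF v, of F] by blast
  then obtain y where "(v, y) \<in> frel F" by (auto simp: witness_set_def elim: converse_rtranclE)
  moreover obtain j where "j < l" "v = P ! j" using assms(1) by (metis in_set_conv_nth)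
  ultimately have "?K \<noteq> {}" using F_edge_on_P by fastforce
  moreover have "finite ?K" by (rule finite_subset[of _ "{..<l}"]) auto
  ultimately show thesis using that[of "Max ?K"] Max_in[of ?K] Max_ge[of ?K] by blast
qed

context
  fixes k
  assumes k: "k + 1 < l" "{P ! k, P ! (k + 1)} \<in> F"
    and k_last: "\<And>m. m + 1 < l \<Longrightarrow> {P ! m, P ! (m + 1)} \<in> F \<Longrightarrow> m \<le> k"
begin

lemma F_edge_before_k:
  assumes "j < l" "{P ! j, y} \<in> F"
  shows "\<exists>m\<le>k. (P ! j = P ! m \<and> y = P ! (m + 1) \<or> P ! j = P ! (m + 1) \<and> y = P ! m)"
  using F_edge_on_P[OF assms] k_last assms(2) by (metis doubleton_eq_iff)

lemma pendant_k: "pendant_edge V E F (P ! k) (P ! (k + 1))"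
proof
  fix z assume "{P ! (k + 1), z} \<in> F"
  then obtain m where "m \<le> k"
      "P ! (k + 1) = P ! m \<and> z = P ! (m + 1) \<or> P ! (k + 1) = P ! (m + 1) \<and> z = P ! m"
    using F_edge_before_k[OF k(1)] by blast
  then show "z = P ! k" using P_index_eq k(1) by auto
qed (use graph F_sub k(2) in auto)

lemma witness_set_up_to_k: "W (P ! (k + 1)) \<subseteq> {P ! j | j. j \<le> k + 1}"
proof (rule witness_set_closed)
  fix y z assume "y \<in> {P ! j | j. j \<le> k + 1}" "{y, z} \<in> F"
  then obtain j where "j \<le> k + 1" "{P ! j, z} \<in> F" by blast
  then obtain m where "m \<le> k" "z = P ! (m + 1) \<or> z = P ! m"
    using F_edge_before_k[of j z] k(1) by fastforce
  then show "z \<in> {P ! j | j. j \<le> k + 1}" by force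
qed blast

lemma witness_set_minus_before_k:
  "witness_set V (F - {{P ! k, P ! (k + 1)}}) (P ! k) \<subseteq> {P ! j | j. j \<le> k}"
proof
  interpret pendant_edge V E F "P ! k" "P ! (k + 1)" by (rule pendant_k)
  fix x assume x: "x \<in> X\<^sub>a"
  have "X = W (P ! (k + 1))" using witness_set_eq[OF a_b_in_X(2)] by simp
  then obtain j where "j \<le> k + 1" "x = P ! j" using x X_eq witness_set_up_to_k by blast
  moreover have "x \<noteq> P ! (k + 1)" using x b_notin_X\<^sub>a by blast
  ultimately show "x \<in> {P ! j | j. j \<le> k}" using le_Suc_eq by fastforce
qed

lemma subdividing_inner:
  assumes "k + 2 < l"
  shows "pendant_edge_subdividing V E F (P ! k) (P ! (k + 1)) {P ! (k + 2)} (P ! (k + 2))"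
proof (intro pendant_edge_subdividing.intro[OF pendant_k] pendant_edge_subdividing_axioms.intro)
  have "{P ! (k + 2), z} \<notin> F" for z
  proof
    assume "{P ! (k + 2), z} \<in> F"
    then obtain m where "m \<le> k" "P ! (k + 2) = P ! m \<or> P ! (k + 2) = P ! (m + 1)"
      using F_edge_before_k[OF assms] by blast
    then show False using P_index_eq assms by auto
  qed
  then show "{P ! (k + 2)} \<in> witness V F"
    using witness_set_isolated witness_set_in_witness P_path(2) assms nth_mem by (metis subsetD)
  show "P ! (k + 1) \<notin> {P ! (k + 2)}" using P_index_eq assms by auto
  show "{P ! (k + 1), P ! (k + 2)} \<in> E" using P_path(3)[of "k + 1"] assms by simp
  have "P ! k \<in> witness_set V (F - {{P ! k, P ! (k + 1)}}) (P ! k)"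
    using P_path(2) k(1) by (intro witness_set_self) auto
  then show "nbhd E (P ! (k + 1))
    \<subseteq> witness_set V (F - {{P ! k, P ! (k + 1)}}) (P ! k) \<union> {P ! (k + 2)}"
    using nbhd_inner[of "k + 1"] assms by simp
  fix x y assume "x \<in> witness_set V (F - {{P ! k, P ! (k + 1)}}) (P ! k)" "y \<in> {P ! (k + 2)}"
  then obtain j where "j \<le> k" "x = P ! j" "y = P ! (k + 2)" using witness_set_minus_before_k
    by blast
  then show "{x, y} \<notin> E" using nbhd_on_P[of j "k + 2"] assms by (auto simp: mem_nbhd_iff')
qed simp

lemma subdividing_end:
  assumes "\<not> k + 2 < l" and z: "z \<in> Z \<inter> nbhd E (last P)"
  shows "pendant_edge_subdividing V E F (P ! k) (P ! (k + 1)) (W z) z"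
proof (intro pendant_edge_subdividing.intro[OF pendant_k] pendant_edge_subdividing_axioms.intro)
  have k_end: "k + 1 = l - 1" "k = l - 2" using assms(1) k(1) by auto
  have z_V: "z \<in> V" using z Z_sub by blast
  then show "W z \<in> witness V F" "z \<in> W z" by (simp_all add: witness_set_in_witness witness_set_self)
  show "P ! (k + 1) \<notin> W z" using witness_set_Z[of z] z P_Z k(1) nth_mem[of "k + 1" P] by blast
  show "{P ! (k + 1), z} \<in> E" using z k_end last_P by (simp add: mem_nbhd_iff')
  show "nbhd E (P ! (k + 1)) \<subseteq> witness_set V (F - {{P ! k, P ! (k + 1)}}) (P ! k) \<union> W z"
  proof
    fix y assume y: "y \<in> nbhd E (P ! (k + 1))"
    then have "y \<in> Z \<or> y = P ! k" using nbhd_last last_P k_end by auto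
    moreover have "y \<in> W z" if "y \<in> Z"
     
        using last_neighbours_same_witness[of y z] that y z k_end last_P witness_set_self[of y V F]
            Z_sub
      by auto
    moreover have "P ! k \<in> witness_set V (F - {{P ! k, P ! (k + 1)}}) (P ! k)"
      using P_path(2) k(1) by (intro witness_set_self) auto
    ultimately show "y \<in> witness_set V (F - {{P ! k, P ! (k + 1)}}) (P ! k) \<union> W z" by blast
  qed
  fix x y assume "x \<in> witness_set V (F - {{P ! k, P ! (k + 1)}}) (P ! k)" and y: "y \<in> W z"
  then obtain j where j: "j \<le> k" "x = P ! j" using witness_set_minus_before_k by blast
  have "y \<in> Z" "y \<notin> set P" using y witness_set_Z[of z] z P_Z by auto
  then show "{x, y} \<notin> E"
    using nbhd_off_P[of j y] j k(1) k_end Y_Z by (auto simp: mem_nbhd_iff insert_commute)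
qed

end

lemma singleton_witness_sets:
  assumes minimal: "\<And>F'. F' \<subset> F \<Longrightarrow> \<not> cactus (witness V F') (contr_edges V E F')"
  shows "\<forall>v\<in>set P. {v} \<in> witness V F"
proof (intro ballI, rule ccontr)
  fix v assume "v \<in> set P" "{v} \<notin> witness V F"
  then obtain k where k: "k + 1 < l" "{P ! k, P ! (k + 1)} \<in> F"
    "\<And>m. m + 1 < l \<Longrightarrow> {P ! m, P ! (m + 1)} \<in> F \<Longrightarrow> m \<le> k"
    by (rule last_F_edge_on_P) blast
  obtain N c where sub: "pendant_edge_subdividing V E F (P ! k) (P ! (k + 1)) N c"
    using subdividing_inner[OF k] subdividing_end[OF k] last_Z_neighbours by blast
  let ?F' = "F - {{P ! k, P ! (k + 1)}}"
  have "cactus (witness V ?F') (contr_edges V E ?F')"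
    by (rule pendant_edge_subdividing.cactus_minus_edge[OF sub])
      (use two_connected cactus in \<open>simp_all add: two_connected_def\<close>)
  moreover have "?F' \<subset> F" using k(2) by blast
  ultimately show False using minimal by blast
qed

end

theorem lemma4p3:
  fixes V :: "'a set" and E F :: "'a set set" and f :: "'a \<Rightarrow> nat"
    and Y Z :: "'a set" and P :: "'a list"
  assumes "two_connected V E"
    and "minimal_cactus_contraction V E F"
    and "compatible V E F f"
    and "mono_component V E f Y" and "mono_component V E f Z" and "Y \<noteq> Z"
    and "length P \<ge> 2"
    and "component (V - (Y \<union> Z)) E (set P)"
    and "max_cable_path V E P"
    and "nbhd E (hd P) \<subseteq> Y \<union> {P ! 1}"
    and "nbhd E (last P) \<subseteq> Z \<union> {P ! (length P - 2)}"
  shows "(\<forall>v\<in>set P. {v} \<in> witness V F)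
    \<and> (\<exists>W\<in>witness V F. card W \<ge> 2 \<and> W \<subseteq> Y)
    \<and> (\<exists>W\<in>witness V F. card W \<ge> 2 \<and> W \<subseteq> Z)"
proof -
  have F: "F \<subseteq> E" "cactus (witness V F) (contr_edges V E F)"
    and minimal: "\<And>F'. F' \<subset> F \<Longrightarrow> \<not> cactus (witness V F') (contr_edges V E F')"
    using assms(2) unfolding minimal_cactus_contraction_def by blast+
  have "set P \<subseteq> V - (Y \<union> Z)" using assms(8) by (simp add: component_def)
  then interpret separating_cable V E F f Y Z P
    using assms(1,3-7,9-11) F mono_components_disjoint[OF assms(4-6)] by unfold_locales blast+
  show ?thesis using singleton_witness_sets[OF minimal] big_witness_set_Y big_witness_set_Z by blast
qed

end
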